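(* For every $n\ge1$, the generating function of arrowed monotone triangles with bottom row $(1,2,\dots,n)$ equals $$\prod_{i=1}^nX_i^{n}\,\frac{\det_{1\le i,j\le n}\left((uX_i+w)^j-(-vX_i^{-1})^j\right)}{\prod_{1\le i<j\le n}(X_j-X_i)}=\prod_{i=1}^nX_i^{n}\,\frac{\sum_{\sigma\in S_n}\operatorname{sgn}(\sigma)\prod_{1\le p\le q\le n}\left(uX_{\sigma(q)}+vX_{\sigma(p)}^{-1}+w\right)}{\prod_{1\le i<j\le n}(X_j-X_i)}.$$
   Context: A monotone triangle with $n$ rows is an array $(m_{i,j})_{1\le j\le i\le n}$ of integers with $m_{i+1,j}\le m_{i,j}\le m_{i+1,j+1}$, $m_{i,j}<m_{i,j+1}$; row $n$ is the bottom row; northwest/northeast-neighbours of $m_{i,j}$ are $m_{i-1,j-1}$, $m_{i-1,j}$. An arrowed monotone triangle decorates each entry with one of $\nwarrow,\nearrow,\nwarrow\!\nearrow$ such that an entry equal to its northwest-neighbour carries $\nearrow$ and an entry equal to its northeast-neighbour carries $\nwarrow$. Its weight is $u^{\#\nearrow}v^{\#\nwarrow}w^{\#\nwarrow\nearrow}\prod_{i=1}^nX_i^{(\text{sum of row }i)-(\text{sum of row }i-1)+(\#\nearrow\text{ in row }i)-(\#\nwarrow\text{ in row }i)}$ (sum of row $0$ is $0$). *)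

theory Defs
  imports Main "HOL-Combinatorics.Permutations" "Jordan_Normal_Form.Determinant"
begin

text \<open>Decorations of entries: NW = north-west arrow, NE = north-east arrow,
  NWNE = both arrows.\<close>
datatype arrow = NW | NE | NWNE

text \<open>A (decorated) triangle is a pair (m, d) of functions on index pairs (i, j),
  1 <= j <= i <= n; outside this range they take the default values 0 / NW so
  that the set of triangles is a set of genuinely distinct objects.\<close>

definition in_tri :: "nat \<Rightarrow> nat \<Rightarrow> nat \<Rightarrow> bool" where
  "in_tri n i j \<longleftrightarrow> 1 \<le> j \<and> j \<le> i \<and> i \<le> n"

definition monotone_triangle :: "nat \<Rightarrow> (nat \<Rightarrow> nat \<Rightarrow> int) \<Rightarrow> bool" where
  "monotone_triangle n m \<longleftrightarrow>
     (\<forall>i j. 1 \<le> j \<and> j \<le> i \<and> i < n \<longrightarrow> m (i+1) j \<le> m i j \<and> m i j \<le> m (i+1) (j+1)) \<and>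
     (\<forall>i j. 1 \<le> j \<and> j < i \<and> i \<le> n \<longrightarrow> m i j < m i (j+1))"

definition arrowed_MT :: "nat \<Rightarrow> ((nat \<Rightarrow> nat \<Rightarrow> int) \<times> (nat \<Rightarrow> nat \<Rightarrow> arrow)) set" where
  "arrowed_MT n = {(m, d).
     (\<forall>i j. \<not> in_tri n i j \<longrightarrow> m i j = 0 \<and> d i j = NW) \<and>
     monotone_triangle n m \<and>
     (\<forall>j. 1 \<le> j \<and> j \<le> n \<longrightarrow> m n j = int j) \<and>
     \<comment> \<open>equal to north-west neighbour m(i-1,j-1) implies NE arrow\<close>
     (\<forall>i j. in_tri n i j \<and> 2 \<le> j \<and> m i j = m (i-1) (j-1) \<longrightarrow> d i j = NE) \<and>
     \<comment> \<open>equal to north-east neighbour m(i-1,j) implies NW arrow\<close>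
     (\<forall>i j. in_tri n i j \<and> j < i \<and> m i j = m (i-1) j \<longrightarrow> d i j = NW)}"

definition row_sum :: "(nat \<Rightarrow> nat \<Rightarrow> int) \<Rightarrow> nat \<Rightarrow> int" where
  "row_sum m i = (\<Sum>j=1..i. m i j)"

definition row_count :: "(nat \<Rightarrow> nat \<Rightarrow> arrow) \<Rightarrow> nat \<Rightarrow> arrow \<Rightarrow> nat" where
  "row_count d i a = card {j \<in> {1..i}. d i j = a}"

definition total_count :: "nat \<Rightarrow> (nat \<Rightarrow> nat \<Rightarrow> arrow) \<Rightarrow> arrow \<Rightarrow> nat" where
  "total_count n d a = (\<Sum>i=1..n. row_count d i a)"

definition amt_weight :: "nat \<Rightarrow> 'a::field \<Rightarrow> 'a \<Rightarrow> 'a \<Rightarrow> (nat \<Rightarrow> 'a)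
    \<Rightarrow> (nat \<Rightarrow> nat \<Rightarrow> int) \<times> (nat \<Rightarrow> nat \<Rightarrow> arrow) \<Rightarrow> 'a" where
  "amt_weight n u v w X t = (case t of (m, d) \<Rightarrow>
     u ^ total_count n d NE * v ^ total_count n d NW * w ^ total_count n d NWNE *
     (\<Prod>i=1..n. X i powi (row_sum m i - row_sum m (i - 1)
                          + int (row_count d i NE) - int (row_count d i NW))))"

definition amt_gf :: "nat \<Rightarrow> 'a::field \<Rightarrow> 'a \<Rightarrow> 'a \<Rightarrow> (nat \<Rightarrow> 'a) \<Rightarrow> 'a" where
  "amt_gf n u v w X = (\<Sum>t\<in>arrowed_MT n. amt_weight n u v w X t)"

end

theory Submission
  imports Defs "HOL-Computational_Algebra.Polynomial" "HOL-Library.FuncSet"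
begin

text \<open>
  Let \<open>GF n k\<close> be the generating function of arrowed monotone triangles with \<open>n\<close> rows and
  strictly increasing bottom row \<open>k\<close>, and \<open>Q x y = u x + v / y + w x / y\<close>.  Deleting the bottom
  row writes \<open>GF (n+1) k\<close> as a sum, over the arrows of the bottom row and over the rows \<open>l\<close>
  interlacing \<open>k\<close>, of \<open>GF n l\<close>; each entry of \<open>l\<close> runs through an integer interval.  By induction
  on \<open>n\<close>, \<open>GF n k * \<Prod>i<j. (X j - X i)\<close> equals \<open>\<Prod>i. Q (X i) (X i)\<close> times the antisymmetrisation
  over \<open>\<sigma>\<close> of \<open>\<Prod>j. X (\<sigma> j) ^ (k j + j - 1) * \<Prod>p<q. Q (X (\<sigma> p)) (X (\<sigma> q))\<close>.  In the
  induction step the factors \<open>X (n+1) - X i\<close> turn the sums over the intervals into telescoping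
  geometric sums; after expanding, all terms cancel in pairs under adjacent transpositions
  except those that insert \<open>X (n+1)\<close> into a permutation of \<open>{1..n}\<close>, and these assemble the
  antisymmetrisation for \<open>n+1\<close>.  For \<open>k = (1,\<dots>,n)\<close> this is the second formula.  The determinant
  arises from the signed sum by replacing, for \<open>q = 1, \<dots>, n\<close> in turn, \<open>\<Prod>p\<le>q. (a (\<sigma> q) + b (\<sigma> p))\<close>
  by \<open>a (\<sigma> q) ^ q - (- b (\<sigma> q)) ^ q\<close>: the difference is a combination of lower powers, each of
  which occurs twice and cancels in the signed sum.
\<close>

section \<open>Signed sums over permutations\<close>

lemma signed_sum_permutes_eq_0_if_swap_invariant:
  fixes f :: "('b \<Rightarrow> 'b) \<Rightarrow> 'a::comm_ring_1"
  assumes fin: "finite S" and ab: "a \<in> S" "b \<in> S" "a \<noteq> b"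
    and inv: "\<And>\<sigma>. \<sigma> permutes S \<Longrightarrow> f (\<sigma> \<circ> Transposition.transpose a b) = f \<sigma>"
  shows "(\<Sum>\<sigma> | \<sigma> permutes S. of_int (sign \<sigma>) * f \<sigma>) = 0"
proof -
  define t where "t = Transposition.transpose a b"
  define P where "P = {\<sigma>. \<sigma> permutes S}"
  define E where "E = {\<sigma>\<in>P. evenperm \<sigma>}"
  define Od where "Od = {\<sigma>\<in>P. \<not> evenperm \<sigma>}"
  have "finite P" unfolding P_def using finite_permutations[OF fin] by simp
  have t_permutes: "t permutes S" unfolding t_def using ab permutes_swap_id by metis
  have t_perm: "permutation t" unfolding t_def by (rule permutation_swap_id)
  have t_odd: "\<not> evenperm t" unfolding t_def using ab by (simp add: evenperm_swap)
  have parity: "evenperm (\<sigma> \<circ> t) = (\<not> evenperm \<sigma>)" if "\<sigma> \<in> P" for \<sigma>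
  proof -
    have "permutation \<sigma>" using that fin permutes_imp_permutation unfolding P_def by blast
    then show ?thesis
      using evenperm_comp[OF _ t_perm] t_odd by auto
  qed
  have closed: "\<sigma> \<circ> t \<in> P" if "\<sigma> \<in> P" for \<sigma>
    using that t_permutes permutes_compose unfolding P_def by blast
  have "bij_betw (\<lambda>\<sigma>. \<sigma> \<circ> t) E Od"
    by (rule bij_betw_byWitness[where f'="\<lambda>\<sigma>. \<sigma> \<circ> t"])
      (use parity closed in \<open>auto simp: E_def Od_def t_def comp_assoc\<close>)
  then have "(\<Sum>\<sigma>\<in>Od. of_int (sign \<sigma>) * f \<sigma>) = (\<Sum>\<sigma>\<in>E. of_int (sign (\<sigma> \<circ> t)) * f (\<sigma> \<circ> t))"
    by (simp add: sum.reindex_bij_betw[symmetric])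
  also have "\<dots> = - (\<Sum>\<sigma>\<in>E. of_int (sign \<sigma>) * f \<sigma>)"
    by (auto simp: sum_negf[symmetric] E_def P_def t_def sign_def parity[unfolded P_def t_def] inv
        intro!: sum.cong)
  finally have "(\<Sum>\<sigma>\<in>E. of_int (sign \<sigma>) * f \<sigma>) + (\<Sum>\<sigma>\<in>Od. of_int (sign \<sigma>) * f \<sigma>) = 0"
    by simp
  moreover have "P = E \<union> Od" "E \<inter> Od = {}" unfolding E_def Od_def by auto
  ultimately show ?thesis
    using \<open>finite P\<close> by (simp add: P_def[symmetric] sum.union_disjoint)
qed

lemma signed_sum_permutes_transfer:
  fixes F :: "('c \<Rightarrow> 'c) \<Rightarrow> 'a::comm_ring_1"
  assumes bij: "bij_betw f A B" and inv: "\<And>x. x \<in> A \<Longrightarrow> g (f x) = x" and fin: "finite A"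
  shows "(\<Sum>\<pi> | \<pi> permutes B. of_int (sign \<pi>) * F \<pi>) =
         (\<Sum>p | p permutes A. of_int (sign p) * F (map_permutation A f p))"
proof -
  have inv': "\<And>y. y \<in> B \<Longrightarrow> f (g y) = y" using bij inv unfolding bij_betw_def by auto
  have bij': "bij_betw g B A"
    by (rule bij_betw_byWitness[where f'=f]) (use bij inv inv' in \<open>auto simp: bij_betw_def\<close>)
  have "bij_betw (map_permutation A f) {p. p permutes A} {\<pi>. \<pi> permutes B}"
    by (rule bij_betw_byWitness[where f'="map_permutation B g"])
      (use map_permutation_compose_inv[OF bij _ inv] map_permutation_compose_inv[OF bij' _ inv']
        map_permutation_permutes[OF bij] map_permutation_permutes[OF bij'] in auto)
  from sum.reindex_bij_betw[OF this, of "\<lambda>\<pi>. of_int (sign \<pi>) * F \<pi>", symmetric] show ?thesis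
    using bij by (auto intro!: sum.cong simp: sign_map_permutation fin bij_betw_def)
qed

text \<open>The cycle \<open>a+1 \<mapsto> m+1 \<mapsto> m \<mapsto> \<dots> \<mapsto> a+2 \<mapsto> a+1\<close> of \<open>{1..m+1}\<close>;
  composing a permutation of \<open>{1..m}\<close> with it inserts the new value \<open>m+1\<close> at position \<open>a+1\<close>.\<close>

definition insert_cycle :: "nat \<Rightarrow> nat \<Rightarrow> nat \<Rightarrow> nat" where
  "insert_cycle m a j = (if j \<le> a then j else if j = Suc a then Suc m else if j \<le> Suc m then j - 1 else j)"

lemma insert_cycle_permutes_sign:
  "a \<le> m \<Longrightarrow> insert_cycle m a permutes {1..Suc m} \<and> sign (insert_cycle m a) = (-1) ^ (m - a)"
proof (induction a rule: inc_induct)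
  case base
  have "insert_cycle m m = id" by (auto simp: insert_cycle_def fun_eq_iff)
  then show ?case by (simp add: permutes_id[unfolded id_def])
next
  case (step a)
  define t where "t = Transposition.transpose (Suc a) (Suc (Suc a))"
  have t: "t permutes {1..Suc m}" unfolding t_def using step by (intro permutes_swap_id) auto
  have split: "insert_cycle m a = insert_cycle m (Suc a) \<circ> t"
    using step by (auto simp: insert_cycle_def fun_eq_iff Transposition.transpose_def t_def)
  have "sign (insert_cycle m a) = sign (insert_cycle m (Suc a)) * sign t"
    unfolding split
    by (rule sign_compose) (use step(3) in \<open>auto intro: permutes_imp_permutation simp: t_def permutation_swap_id\<close>)
  also have "\<dots> = (-1) ^ (m - a)"
  proof -
    have "m - a = Suc (m - Suc a)" using step(2) by arith
    then show ?thesis using step(2,3) by (simp add: sign_swap_id t_def)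
  qed
  finally show ?case using split step(3) t permutes_compose by metis
qed

lemma comp_insert_cycle_apply:
  assumes "\<pi> permutes {1..m}"
  shows "j \<le> a \<Longrightarrow> (\<pi> \<circ> insert_cycle m a) j = \<pi> j"
    and "(\<pi> \<circ> insert_cycle m a) (Suc a) = Suc m"
    and "Suc a \<le> j \<Longrightarrow> j \<le> m \<Longrightarrow> (\<pi> \<circ> insert_cycle m a) (Suc j) = \<pi> j"
  using permutes_not_in[OF assms, of "Suc m"] by (auto simp: insert_cycle_def)

lemma bij_betw_insert_cycle:
  "bij_betw (\<lambda>(a, \<pi>). \<pi> \<circ> insert_cycle m a) ({0..m} \<times> {\<pi>. \<pi> permutes {1..m}})
     {\<tau>. \<tau> permutes {1..Suc m}}"
proof -
  define D where "D = {0..m} \<times> {\<pi>. \<pi> permutes {1..m}}"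
  define h :: "nat \<times> (nat \<Rightarrow> nat) \<Rightarrow> nat \<Rightarrow> nat" where "h = (\<lambda>(a, \<pi>). \<pi> \<circ> insert_cycle m a)"
  have h_in: "h x \<in> {\<tau>. \<tau> permutes {1..Suc m}}" if xD: "x \<in> D" for x
  proof -
    obtain a \<pi> where x: "x = (a, \<pi>)" "a \<le> m" "\<pi> permutes {1..m}"
      using xD unfolding D_def by (cases x) auto
    have "\<pi> permutes {1..Suc m}" using x(3) by (rule permutes_subset) auto
    then show ?thesis using insert_cycle_permutes_sign[OF x(2)] permutes_compose by (auto simp: h_def x)
  qed
  have "inj_on h D"
  proof (rule inj_onI)
    fix x y assume "x \<in> D" "y \<in> D" and eq: "h x = h y"
    then obtain a \<pi> b \<rho> where x: "x = (a, \<pi>)" "a \<le> m" "\<pi> permutes {1..m}"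
      and y: "y = (b, \<rho>)" "b \<le> m" "\<rho> permutes {1..m}" unfolding D_def by (cases x, cases y) auto
    have eq': "\<pi> \<circ> insert_cycle m a = \<rho> \<circ> insert_cycle m b" using eq by (simp add: h_def x y)
    have "a = b"
    proof (rule ccontr)
      assume "a \<noteq> b"
      then have "insert_cycle m b (Suc a) \<in> {1..m}"
        using x(2) y(2) by (auto simp: insert_cycle_def)
      then have "\<rho> (insert_cycle m b (Suc a)) \<in> {1..m}" by (rule permutes_in_image[OF y(3), THEN iffD2])
      moreover have "(\<pi> \<circ> insert_cycle m a) (Suc a) = Suc m" by (rule comp_insert_cycle_apply(2)[OF x(3)])
      ultimately show False using fun_cong[OF eq', of "Suc a"] by simp
    qed
    moreover have "\<pi> = \<rho>"
    proof -
      have c: "insert_cycle m a permutes {1..Suc m}" using insert_cycle_permutes_sign[OF x(2)] by simp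
      have "\<pi> = \<pi> \<circ> insert_cycle m a \<circ> inv_into UNIV (insert_cycle m a)"
        "\<rho> = \<rho> \<circ> insert_cycle m a \<circ> inv_into UNIV (insert_cycle m a)"
        using permutes_inverses(1)[OF c] by (auto simp: fun_eq_iff)
      then show ?thesis using eq' \<open>a = b\<close> by metis
    qed
    ultimately show "x = y" using x y by simp
  qed
  moreover have "card D = card {\<tau>. \<tau> permutes {1..Suc m}}"
    unfolding D_def using card_permutations[of "{1..m}" m] card_permutations[of "{1..Suc m}" "Suc m"]
    by (simp add: card_cartesian_product)
  ultimately have "card (h ` D) = card {\<tau>. \<tau> permutes {1..Suc m}}" by (simp add: card_image)
  then have "h ` D = {\<tau>. \<tau> permutes {1..Suc m}}"
    by (rule card_subset_eq[OF finite_permutations[OF finite_atLeastAtMost], rotated]) (use h_in in blast)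
  then show ?thesis using \<open>inj_on h D\<close> unfolding bij_betw_def D_def h_def by simp
qed

lemma signed_sum_permutes_Suc:
  fixes f :: "(nat \<Rightarrow> nat) \<Rightarrow> 'a::comm_ring_1"
  shows "(\<Sum>\<tau> | \<tau> permutes {1..Suc m}. of_int (sign \<tau>) * f \<tau>)
       = (\<Sum>a=0..m. \<Sum>\<pi> | \<pi> permutes {1..m}. (-1) ^ (m - a) * (of_int (sign \<pi>) * f (\<pi> \<circ> insert_cycle m a)))"
proof -
  have sign: "sign (\<pi> \<circ> insert_cycle m a) = sign \<pi> * (-1) ^ (m - a)"
    if "a \<le> m" "\<pi> permutes {1..m}" for a \<pi>
    using that insert_cycle_permutes_sign[of a m]
    by (subst sign_compose) (auto intro: permutes_imp_permutation)
  have "(\<Sum>\<tau> | \<tau> permutes {1..Suc m}. of_int (sign \<tau>) * f \<tau>)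
      = (\<Sum>x\<in>{0..m} \<times> {\<pi>. \<pi> permutes {1..m}}. (\<lambda>\<tau>. of_int (sign \<tau>) * f \<tau>) ((\<lambda>(a, \<pi>). \<pi> \<circ> insert_cycle m a) x))"
    by (rule sum.reindex_bij_betw[OF bij_betw_insert_cycle, symmetric])
  also have "\<dots> = (\<Sum>a=0..m. \<Sum>\<pi> | \<pi> permutes {1..m}. of_int (sign (\<pi> \<circ> insert_cycle m a)) * f (\<pi> \<circ> insert_cycle m a))"
    by (simp add: sum.cartesian_product split_def)
  finally show ?thesis by (auto simp: sign ac_simps intro!: sum.cong)
qed

section \<open>The signed sum as a determinant\<close>

definition alt_entry :: "(nat \<Rightarrow> 'a::comm_ring_1) \<Rightarrow> (nat \<Rightarrow> 'a) \<Rightarrow> nat \<Rightarrow> nat \<Rightarrow> 'a" where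
  "alt_entry a b q i = a i ^ q - (- b i) ^ q"

definition upper_prod :: "(nat \<Rightarrow> 'a::comm_ring_1) \<Rightarrow> (nat \<Rightarrow> 'a) \<Rightarrow> nat \<Rightarrow> (nat \<Rightarrow> nat) \<Rightarrow> 'a" where
  "upper_prod a b q \<sigma> = (\<Prod>p=1..q. a (\<sigma> q) + b (\<sigma> p))"

definition linear_factors :: "(nat \<Rightarrow> 'a::comm_ring_1) \<Rightarrow> nat set \<Rightarrow> 'a poly" where
  "linear_factors b S = (\<Prod>i\<in>S. [:b i, 1:])"

text \<open>The monic polynomial \<open>\<Prod>i\<in>S. y + b i\<close> vanishes at \<open>y = - b c\<close>; subtracting this value
  turns each monomial \<open>y ^ m\<close> into \<open>alt_entry a b m c\<close>.\<close>

lemma prod_linear_factors_expand: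
  fixes a b :: "nat \<Rightarrow> 'a::field"
  assumes fin: "finite S" and c: "c \<in> S"
  shows "(\<Prod>i\<in>S. a c + b i)
       = alt_entry a b (card S) c + (\<Sum>m=1..<card S. coeff (linear_factors b S) m * alt_entry a b m c)"
proof -
  define N where "N = card S"
  have "N \<ge> 1" using fin c unfolding N_def by (metis One_nat_def Suc_leI card_gt_0_iff empty_iff)
  have poly_eq: "poly (linear_factors b S) y = (\<Prod>i\<in>S. y + b i)" for y
    unfolding linear_factors_def poly_prod by (simp add: add.commute)
  have deg: "degree (linear_factors b S) = N"
    unfolding linear_factors_def N_def by (subst degree_prod_sum_eq) auto
  have monic: "coeff (linear_factors b S) N = 1"
    using lead_coeff_prod[of "\<lambda>i. [:b i, 1:]" S] deg unfolding linear_factors_def by simp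
  have "(\<Prod>i\<in>S. a c + b i) = poly (linear_factors b S) (a c) - poly (linear_factors b S) (- b c)"
    using fin c by (auto simp: poly_eq prod_zero_iff)
  also have "\<dots> = (\<Sum>m\<le>N. coeff (linear_factors b S) m * alt_entry a b m c)"
    unfolding poly_altdef deg alt_entry_def by (simp add: sum_subtractf[symmetric] right_diff_distrib)
  also have "{..N} = insert N (insert 0 {1..<N})" using \<open>N \<ge> 1\<close> by auto
  finally show ?thesis
    using \<open>N \<ge> 1\<close> monic by (simp add: alt_entry_def N_def)
qed

definition reduced_sum :: "(nat \<Rightarrow> 'a::comm_ring_1) \<Rightarrow> (nat \<Rightarrow> 'a) \<Rightarrow> nat \<Rightarrow> nat \<Rightarrow> 'a" where
  "reduced_sum a b n r = (\<Sum>\<sigma> | \<sigma> permutes {1..n}. of_int (sign \<sigma>) *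
      ((\<Prod>q=1..r. alt_entry a b q (\<sigma> q)) * (\<Prod>q=Suc r..n. upper_prod a b q \<sigma>)))"

lemma upper_prod_eq_prod_image:
  assumes "\<sigma> permutes {1..n}" "q \<le> n"
  shows "upper_prod a b q \<sigma> = (\<Prod>i\<in>\<sigma> ` {1..q}. a (\<sigma> q) + b i)"
proof -
  have "inj_on \<sigma> {1..q}" using assms permutes_inj inj_on_subset by blast
  then show ?thesis unfolding upper_prod_def by (simp add: prod.reindex)
qed

text \<open>A lower term carries \<open>alt_entry a b m\<close> at both positions \<open>m\<close> and \<open>r+1\<close>, so it is invariant
  under swapping them and cancels in the signed sum.\<close>

lemma reduced_sum_lower_term_eq_0:
  fixes a b :: "nat \<Rightarrow> 'a::field"
  assumes m: "1 \<le> m" "m \<le> r" and r: "r < n"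
  shows "(\<Sum>\<sigma> | \<sigma> permutes {1..n}. of_int (sign \<sigma>) *
           ((\<Prod>q=1..r. alt_entry a b q (\<sigma> q))
            * (coeff (linear_factors b (\<sigma> ` {1..Suc r})) m * alt_entry a b m (\<sigma> (Suc r)))
            * (\<Prod>q=Suc (Suc r)..n. upper_prod a b q \<sigma>))) = 0"
proof (rule signed_sum_permutes_eq_0_if_swap_invariant[where a=m and b="Suc r"])
  show "finite {1..n}" "m \<in> {1..n}" "Suc r \<in> {1..n}" "m \<noteq> Suc r" using m r by auto
next
  fix \<sigma> :: "nat \<Rightarrow> nat"
  define t where "t = Transposition.transpose m (Suc r)"
  have t_other: "t q = q" if "q \<noteq> m" "q \<noteq> Suc r" for q using that unfolding t_def by simp
  have fin: "finite {1..r}" and "m \<in> {1..r}" using m by auto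
  have "(\<Prod>q=1..r. alt_entry a b q ((\<sigma> \<circ> t) q)) * alt_entry a b m ((\<sigma> \<circ> t) (Suc r))
      = alt_entry a b m (\<sigma> (Suc r)) * (\<Prod>q\<in>{1..r}-{m}. alt_entry a b q (\<sigma> q)) * alt_entry a b m (\<sigma> m)"
    using prod.remove[OF fin \<open>m \<in> {1..r}\<close>, of "\<lambda>q. alt_entry a b q ((\<sigma> \<circ> t) q)"]
    by (auto simp: t_def intro!: prod.cong)
  also have "\<dots> = (\<Prod>q=1..r. alt_entry a b q (\<sigma> q)) * alt_entry a b m (\<sigma> (Suc r))"
    using prod.remove[OF fin \<open>m \<in> {1..r}\<close>, of "\<lambda>q. alt_entry a b q (\<sigma> q)"] by (simp add: ac_simps)
  finally have A: "(\<Prod>q=1..r. alt_entry a b q ((\<sigma> \<circ> t) q)) * alt_entry a b m ((\<sigma> \<circ> t) (Suc r))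
      = (\<Prod>q=1..r. alt_entry a b q (\<sigma> q)) * alt_entry a b m (\<sigma> (Suc r))" .
  have "t permutes {1..Suc r}" unfolding t_def using m by (intro permutes_swap_id) auto
  then have C: "(\<sigma> \<circ> t) ` {1..Suc r} = \<sigma> ` {1..Suc r}"
    unfolding image_comp[symmetric] by (simp add: permutes_image)
  have B: "upper_prod a b q (\<sigma> \<circ> t) = upper_prod a b q \<sigma>" if "q \<in> {Suc (Suc r)..n}" for q
  proof -
    have "t permutes {1..q}" unfolding t_def using m that by (intro permutes_swap_id) auto
    then have "(\<Prod>p=1..q. a (\<sigma> q) + b (\<sigma> (t p))) = (\<Prod>p=1..q. a (\<sigma> q) + b (\<sigma> p))"
      using prod.permute[of t "{1..q}" "\<lambda>p. a (\<sigma> q) + b (\<sigma> p)"] by (simp add: comp_def)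
    then show ?thesis unfolding upper_prod_def using t_other[of q] that m by auto
  qed
  then have B: "(\<Prod>q=Suc (Suc r)..n. upper_prod a b q (\<sigma> \<circ> t)) = (\<Prod>q=Suc (Suc r)..n. upper_prod a b q \<sigma>)"
    by (rule prod.cong[OF refl])
  have "(\<Prod>q=1..r. alt_entry a b q ((\<sigma> \<circ> t) q))
      * (coeff (linear_factors b ((\<sigma> \<circ> t) ` {1..Suc r})) m * alt_entry a b m ((\<sigma> \<circ> t) (Suc r)))
      * (\<Prod>q=Suc (Suc r)..n. upper_prod a b q (\<sigma> \<circ> t))
    = ((\<Prod>q=1..r. alt_entry a b q ((\<sigma> \<circ> t) q)) * alt_entry a b m ((\<sigma> \<circ> t) (Suc r)))
      * (coeff (linear_factors b (\<sigma> ` {1..Suc r})) m * (\<Prod>q=Suc (Suc r)..n. upper_prod a b q \<sigma>))"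
    unfolding B C by (simp only: mult_ac)
  also have "\<dots> = (\<Prod>q=1..r. alt_entry a b q (\<sigma> q))
      * (coeff (linear_factors b (\<sigma> ` {1..Suc r})) m * alt_entry a b m (\<sigma> (Suc r)))
      * (\<Prod>q=Suc (Suc r)..n. upper_prod a b q \<sigma>)"
    unfolding A by (simp only: mult_ac)
  finally show "(\<Prod>q=1..r. alt_entry a b q ((\<sigma> \<circ> Transposition.transpose m (Suc r)) q))
      * (coeff (linear_factors b ((\<sigma> \<circ> Transposition.transpose m (Suc r)) ` {1..Suc r})) m
         * alt_entry a b m ((\<sigma> \<circ> Transposition.transpose m (Suc r)) (Suc r)))
      * (\<Prod>q=Suc (Suc r)..n. upper_prod a b q (\<sigma> \<circ> Transposition.transpose m (Suc r)))
    = (\<Prod>q=1..r. alt_entry a b q (\<sigma> q))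
      * (coeff (linear_factors b (\<sigma> ` {1..Suc r})) m * alt_entry a b m (\<sigma> (Suc r)))
      * (\<Prod>q=Suc (Suc r)..n. upper_prod a b q \<sigma>)"
    unfolding t_def .
qed

lemma reduced_sum_Suc:
  fixes a b :: "nat \<Rightarrow> 'a::field"
  assumes r: "r < n"
  shows "reduced_sum a b n r = reduced_sum a b n (Suc r)"
proof -
  define A where "A \<sigma> = (\<Prod>q=1..r. alt_entry a b q (\<sigma> q))" for \<sigma>
  define B where "B \<sigma> = (\<Prod>q=Suc (Suc r)..n. upper_prod a b q \<sigma>)" for \<sigma>
  define C where "C m \<sigma> = coeff (linear_factors b (\<sigma> ` {1..Suc r})) m" for m \<sigma>
  define P where "P = {\<sigma>. \<sigma> permutes {1..n}}"
  have expand: "upper_prod a b (Suc r) \<sigma> = alt_entry a b (Suc r) (\<sigma> (Suc r))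
      + (\<Sum>m=1..<Suc r. C m \<sigma> * alt_entry a b m (\<sigma> (Suc r)))" if "\<sigma> \<in> P" for \<sigma>
  proof -
    have \<sigma>: "\<sigma> permutes {1..n}" using that P_def by auto
    then have "inj_on \<sigma> {1..Suc r}" using permutes_inj inj_on_subset by blast
    then have card: "card (\<sigma> ` {1..Suc r}) = Suc r" using card_image by fastforce
    have "upper_prod a b (Suc r) \<sigma> = (\<Prod>i\<in>\<sigma> ` {1..Suc r}. a (\<sigma> (Suc r)) + b i)"
      using upper_prod_eq_prod_image[OF \<sigma>, of "Suc r"] r by simp
    also have "\<dots> = alt_entry a b (Suc r) (\<sigma> (Suc r)) + (\<Sum>m=1..<Suc r. C m \<sigma> * alt_entry a b m (\<sigma> (Suc r)))"
      using prod_linear_factors_expand[of "\<sigma> ` {1..Suc r}" "\<sigma> (Suc r)" a b] unfolding card C_def by simp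
    finally show ?thesis .
  qed
  have "reduced_sum a b n r = (\<Sum>\<sigma>\<in>P. of_int (sign \<sigma>) * (A \<sigma> * upper_prod a b (Suc r) \<sigma> * B \<sigma>))"
    unfolding reduced_sum_def P_def A_def B_def using r
    by (simp add: prod.atLeast_Suc_atMost mult.assoc)
  also have "\<dots> = (\<Sum>\<sigma>\<in>P. of_int (sign \<sigma>) * (A \<sigma> * alt_entry a b (Suc r) (\<sigma> (Suc r)) * B \<sigma>)
       + (\<Sum>m=1..<Suc r. of_int (sign \<sigma>) * (A \<sigma> * (C m \<sigma> * alt_entry a b m (\<sigma> (Suc r))) * B \<sigma>)))"
    by (rule sum.cong[OF refl]) (simp add: expand algebra_simps sum_distrib_left sum_distrib_right)
  also have "\<dots> = (\<Sum>\<sigma>\<in>P. of_int (sign \<sigma>) * (A \<sigma> * alt_entry a b (Suc r) (\<sigma> (Suc r)) * B \<sigma>))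
       + (\<Sum>m=1..<Suc r. \<Sum>\<sigma>\<in>P. of_int (sign \<sigma>) * (A \<sigma> * (C m \<sigma> * alt_entry a b m (\<sigma> (Suc r))) * B \<sigma>))"
    by (simp add: sum.distrib sum.swap[of _ P])
  also have "(\<Sum>m=1..<Suc r. \<Sum>\<sigma>\<in>P. of_int (sign \<sigma>) * (A \<sigma> * (C m \<sigma> * alt_entry a b m (\<sigma> (Suc r))) * B \<sigma>)) = 0"
    unfolding P_def A_def B_def C_def
    by (rule sum.neutral, rule ballI, rule reduced_sum_lower_term_eq_0[OF _ _ r]) auto
  also have "(\<Sum>\<sigma>\<in>P. of_int (sign \<sigma>) * (A \<sigma> * alt_entry a b (Suc r) (\<sigma> (Suc r)) * B \<sigma>))
      = reduced_sum a b n (Suc r)"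
    unfolding reduced_sum_def P_def A_def B_def by (simp add: prod.nat_ivl_Suc' ac_simps)
  finally show ?thesis by simp
qed

lemma det_alt_entry:
  fixes a b :: "nat \<Rightarrow> 'a::field"
  shows "det (mat n n (\<lambda>(i, j). alt_entry a b (j+1) (i+1))) = reduced_sum a b n n"
proof -
  define M where "M = mat n n (\<lambda>(i, j). alt_entry a b (j+1) (i+1))"
  have shift: "bij_betw Suc {0..<n} {1..n}"
    by (rule bij_betw_byWitness[where f'="\<lambda>x. x - 1"]) auto
  have "det M = det (transpose_mat M)" unfolding M_def by (rule det_transpose[symmetric]) (rule mat_carrier)
  also have "\<dots> = (\<Sum>p | p permutes {0..<n}. of_int (sign p) * (\<Prod>i=0..<n. alt_entry a b (Suc i) (Suc (p i))))"
    unfolding det_def M_def by (auto intro!: sum.cong prod.cong simp: permutes_in_image)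
  also have "\<dots> = (\<Sum>\<pi> | \<pi> permutes {1..n}. of_int (sign \<pi>) * (\<Prod>q=1..n. alt_entry a b q (\<pi> q)))"
  proof -
    have "(\<Prod>q=1..n. alt_entry a b q (map_permutation {0..<n} Suc p q))
        = (\<Prod>i=0..<n. alt_entry a b (Suc i) (Suc (p i)))" for p
      using prod.reindex_bij_betw[OF shift, of "\<lambda>q. alt_entry a b q (map_permutation {0..<n} Suc p q)"]
      by (simp add: map_permutation_apply)
    then show ?thesis
      using signed_sum_permutes_transfer[OF shift, of "\<lambda>x. x - 1" "\<lambda>\<pi>. \<Prod>q=1..n. alt_entry a b q (\<pi> q)"]
      by simp
  qed
  finally show ?thesis unfolding M_def reduced_sum_def by simp
qed

theorem signed_sum_upper_prod_eq_det:
  fixes a b :: "nat \<Rightarrow> 'a::field"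
  shows "(\<Sum>\<sigma> | \<sigma> permutes {1..n}. of_int (sign \<sigma>) * (\<Prod>q=1..n. \<Prod>p=1..q. a (\<sigma> q) + b (\<sigma> p)))
       = det (mat n n (\<lambda>(i, j). alt_entry a b (j+1) (i+1)))"
proof -
  have "reduced_sum a b n 0 = reduced_sum a b n r" if "r \<le> n" for r
    using that by (induction r) (auto simp: reduced_sum_Suc[symmetric])
  from this[of n] show ?thesis unfolding det_alt_entry by (simp add: reduced_sum_def upper_prod_def)
qed

section \<open>Peeling off the bottom row of an arrowed monotone triangle\<close>

type_synonym triangle = "(nat \<Rightarrow> nat \<Rightarrow> int) \<times> (nat \<Rightarrow> nat \<Rightarrow> arrow)"

fun has_ne :: "arrow \<Rightarrow> bool" where
  "has_ne NE = True" | "has_ne NW = False" | "has_ne NWNE = True"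

fun has_nw :: "arrow \<Rightarrow> bool" where
  "has_nw NE = False" | "has_nw NW = True" | "has_nw NWNE = True"

definition ne_ind :: "arrow \<Rightarrow> int" where "ne_ind a = (if has_ne a then 1 else 0)"

definition nw_ind :: "arrow \<Rightarrow> int" where "nw_ind a = (if has_nw a then 1 else 0)"

lemma arrow_UNIV: "(UNIV :: arrow set) = {NW, NE, NWNE}"
  using arrow.exhaust by auto

lemma finite_arrow [simp]: "finite (UNIV :: arrow set)"
  by (simp add: arrow_UNIV)

definition arrowed_triangles :: "nat \<Rightarrow> (nat \<Rightarrow> int) \<Rightarrow> triangle set" where
  "arrowed_triangles n k = {(m, d).
     (\<forall>i j. \<not> in_tri n i j \<longrightarrow> m i j = 0 \<and> d i j = NW) \<and>
     monotone_triangle n m \<and>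
     (\<forall>j. 1 \<le> j \<and> j \<le> n \<longrightarrow> m n j = k j) \<and>
     (\<forall>i j. in_tri n i j \<and> 2 \<le> j \<and> m i j = m (i-1) (j-1) \<longrightarrow> d i j = NE) \<and>
     (\<forall>i j. in_tri n i j \<and> j < i \<and> m i j = m (i-1) j \<longrightarrow> d i j = NW)}"

lemma arrowed_MT_eq_arrowed_triangles: "arrowed_MT n = arrowed_triangles n (\<lambda>j. int j)"
  unfolding arrowed_MT_def arrowed_triangles_def by simp

lemma arrowed_trianglesD:
  assumes "(m, d) \<in> arrowed_triangles n k"
  shows "\<And>i j. \<not> in_tri n i j \<Longrightarrow> m i j = 0"
    and "\<And>i j. \<not> in_tri n i j \<Longrightarrow> d i j = NW"
    and "\<And>i j. 1 \<le> j \<Longrightarrow> j \<le> i \<Longrightarrow> i < n \<Longrightarrow> m (i+1) j \<le> m i j"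
    and "\<And>i j. 1 \<le> j \<Longrightarrow> j \<le> i \<Longrightarrow> i < n \<Longrightarrow> m i j \<le> m (i+1) (j+1)"
    and "\<And>i j. 1 \<le> j \<Longrightarrow> j < i \<Longrightarrow> i \<le> n \<Longrightarrow> m i j < m i (j+1)"
    and "\<And>j. 1 \<le> j \<Longrightarrow> j \<le> n \<Longrightarrow> m n j = k j"
    and "\<And>i j. in_tri n i j \<Longrightarrow> 2 \<le> j \<Longrightarrow> m i j = m (i-1) (j-1) \<Longrightarrow> d i j = NE"
    and "\<And>i j. in_tri n i j \<Longrightarrow> j < i \<Longrightarrow> m i j = m (i-1) j \<Longrightarrow> d i j = NW"
  using assms unfolding arrowed_triangles_def monotone_triangle_def by auto

lemma arrowed_trianglesI:
  assumes "\<And>i j. \<not> in_tri n i j \<Longrightarrow> m i j = 0"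
    and "\<And>i j. \<not> in_tri n i j \<Longrightarrow> d i j = NW"
    and "\<And>i j. 1 \<le> j \<Longrightarrow> j \<le> i \<Longrightarrow> i < n \<Longrightarrow> m (i+1) j \<le> m i j"
    and "\<And>i j. 1 \<le> j \<Longrightarrow> j \<le> i \<Longrightarrow> i < n \<Longrightarrow> m i j \<le> m (i+1) (j+1)"
    and "\<And>i j. 1 \<le> j \<Longrightarrow> j < i \<Longrightarrow> i \<le> n \<Longrightarrow> m i j < m i (j+1)"
    and "\<And>j. 1 \<le> j \<Longrightarrow> j \<le> n \<Longrightarrow> m n j = k j"
    and "\<And>i j. in_tri n i j \<Longrightarrow> 2 \<le> j \<Longrightarrow> m i j = m (i-1) (j-1) \<Longrightarrow> d i j = NE"
    and "\<And>i j. in_tri n i j \<Longrightarrow> j < i \<Longrightarrow> m i j = m (i-1) j \<Longrightarrow> d i j = NW"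
  shows "(m, d) \<in> arrowed_triangles n k"
  using assms unfolding arrowed_triangles_def monotone_triangle_def by auto

lemma arrowed_triangles_bottom_strict:
  assumes "(m, d) \<in> arrowed_triangles n k" "1 \<le> j" "j < n"
  shows "k j < k (Suc j)"
  using arrowed_trianglesD(5)[OF assms(1), of j n] arrowed_trianglesD(6)[OF assms(1), of j]
    arrowed_trianglesD(6)[OF assms(1), of "Suc j"] assms(2,3)
  by simp

lemma arrowed_triangles_0: "arrowed_triangles 0 k = {(\<lambda>_ _. 0, \<lambda>_ _. NW)}"
proof
  show "arrowed_triangles 0 k \<subseteq> {(\<lambda>_ _. 0, \<lambda>_ _. NW)}"
  proof
    fix t assume t: "t \<in> arrowed_triangles 0 k"
    obtain m1 d1 where t': "t = (m1, d1)" by (cases t)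
    have "m1 = (\<lambda>_ _. 0)" "d1 = (\<lambda>_ _. NW)"
      using arrowed_trianglesD(1,2)[OF t[unfolded t']] unfolding in_tri_def by (auto simp: fun_eq_iff)
    then show "t \<in> {(\<lambda>_ _. 0, \<lambda>_ _. NW)}" using t' by simp
  qed
  show "{(\<lambda>_ _. 0, \<lambda>_ _. NW)} \<subseteq> arrowed_triangles 0 k"
    by (auto intro!: arrowed_trianglesI simp: in_tri_def)
qed

text \<open>Interlacing with the bottom row \<open>k\<close> together with the arrow rules in the bottom row
  \<open>arr\<close> confine the \<open>j\<close>-th entry of the row above to \<open>entry_range k arr j\<close>.\<close>

definition entry_range :: "(nat \<Rightarrow> int) \<Rightarrow> (nat \<Rightarrow> arrow) \<Rightarrow> nat \<Rightarrow> int set" where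
  "entry_range k arr j = {k j + ne_ind (arr j) .. k (Suc j) - nw_ind (arr (Suc j))}"

lemma mem_entry_range_iff:
  "x \<in> entry_range k arr j \<longleftrightarrow> k j \<le> x \<and> x \<le> k (Suc j)
     \<and> (x = k j \<longrightarrow> arr j = NW) \<and> (x = k (Suc j) \<longrightarrow> arr (Suc j) = NE)"
  unfolding entry_range_def ne_ind_def nw_ind_def
  by (cases "arr j"; cases "arr (Suc j)") auto

definition arrow_rows :: "nat \<Rightarrow> (nat \<Rightarrow> arrow) set" where
  "arrow_rows n = PiE {1..n} (\<lambda>_. UNIV)"

definition admissible_rows :: "nat \<Rightarrow> (nat \<Rightarrow> int) \<Rightarrow> (nat \<Rightarrow> arrow) \<Rightarrow> (nat \<Rightarrow> int) set" where
  "admissible_rows n k arr = PiE {1..n-1} (entry_range k arr)"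

definition row_decomposition :: "nat \<Rightarrow> (nat \<Rightarrow> int) \<Rightarrow> ((nat \<Rightarrow> arrow) \<times> (nat \<Rightarrow> int) \<times> triangle) set" where
  "row_decomposition n k = Sigma (arrow_rows n) (\<lambda>arr. Sigma (admissible_rows n k arr) (arrowed_triangles (n - 1)))"

definition attach_row :: "nat \<Rightarrow> (nat \<Rightarrow> int) \<Rightarrow> (nat \<Rightarrow> arrow) \<Rightarrow> triangle \<Rightarrow> triangle" where
  "attach_row n k arr t = ((\<lambda>i j. if i = n \<and> 1 \<le> j \<and> j \<le> n then k j else fst t i j),
                           (\<lambda>i j. if i = n \<and> 1 \<le> j \<and> j \<le> n then arr j else snd t i j))"

definition detach_row :: "nat \<Rightarrow> triangle \<Rightarrow> (nat \<Rightarrow> arrow) \<times> (nat \<Rightarrow> int) \<times> triangle" where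
  "detach_row n t = (restrict (snd t n) {1..n}, restrict (fst t (n - 1)) {1..n - 1},
     ((\<lambda>i j. if i = n then 0 else fst t i j), (\<lambda>i j. if i = n then NW else snd t i j)))"

lemma finite_arrow_rows: "finite (arrow_rows n)"
  unfolding arrow_rows_def by (rule finite_PiE) auto

lemma finite_admissible_rows: "finite (admissible_rows n k arr)"
  unfolding admissible_rows_def entry_range_def by (rule finite_PiE) auto

lemma attach_row_mem:
  assumes k: "\<And>j. 1 \<le> j \<Longrightarrow> j < Suc m \<Longrightarrow> k j < k (Suc j)"
    and l: "l \<in> admissible_rows (Suc m) k arr" and t: "t \<in> arrowed_triangles m l"
  shows "attach_row (Suc m) k arr t \<in> arrowed_triangles (Suc m) k"
proof -
  obtain m1 d1 where t': "t = (m1, d1)" by (cases t)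
  note T = arrowed_trianglesD[OF t[unfolded t']]
  have lb: "\<And>j. j \<in> {1..m} \<Longrightarrow> k j + ne_ind (arr j) \<le> l j \<and> l j \<le> k (Suc j) - nw_ind (arr (Suc j))"
    using l unfolding admissible_rows_def entry_range_def by (auto simp: PiE_iff)
  have ne0: "ne_ind a \<ge> 0" "nw_ind a \<ge> 0" for a unfolding ne_ind_def nw_ind_def by auto
  define M where "M = fst (attach_row (Suc m) k arr t)"
  define D where "D = snd (attach_row (Suc m) k arr t)"
  have Mdef: "M i j = (if i = Suc m \<and> 1 \<le> j \<and> j \<le> Suc m then k j else m1 i j)" for i j
    unfolding M_def attach_row_def t' by simp
  have Ddef: "D i j = (if i = Suc m \<and> 1 \<le> j \<and> j \<le> Suc m then arr j else d1 i j)" for i j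
    unfolding D_def attach_row_def t' by simp
  have intri: "in_tri m i j \<Longrightarrow> in_tri (Suc m) i j" for i j unfolding in_tri_def by auto
  have intri2: "in_tri (Suc m) i j \<Longrightarrow> i \<noteq> Suc m \<Longrightarrow> in_tri m i j" for i j unfolding in_tri_def by auto
  have "(M, D) \<in> arrowed_triangles (Suc m) k"
  proof (rule arrowed_trianglesI)
    fix i j assume h: "\<not> in_tri (Suc m) i j"
    then have "\<not> in_tri m i j" using intri by blast
    moreover have "\<not> (i = Suc m \<and> 1 \<le> j \<and> j \<le> Suc m)" using h unfolding in_tri_def by auto
    ultimately show "M i j = 0" "D i j = NW" unfolding Mdef Ddef using T(1,2) by auto
  next
    fix i j assume h: "1 \<le> j" "j \<le> i" "i < Suc m"
    show "M (i+1) j \<le> M i j"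
    proof (cases "i = m")
      case True
      then show ?thesis using h lb[of j] ne0(1)[of "arr j"] ne0(2)[of "arr (Suc j)"] T(6)[of j] unfolding Mdef by auto
    next
      case False
      then show ?thesis using h T(3)[of j i] unfolding Mdef by auto
    qed
    show "M i j \<le> M (i+1) (j+1)"
    proof (cases "i = m")
      case True
      then show ?thesis using h lb[of j] ne0(1)[of "arr j"] ne0(2)[of "arr (Suc j)"] T(6)[of j] unfolding Mdef by auto
    next
      case False
      then show ?thesis using h T(4)[of j i] unfolding Mdef by auto
    qed
  next
    fix i j assume h: "1 \<le> j" "j < i" "i \<le> Suc m"
    show "M i j < M i (j+1)"
    proof (cases "i = Suc m")
      case True
      then show ?thesis using h k[of j] unfolding Mdef by auto
    next
      case False
      then show ?thesis using h T(5)[of j i] unfolding Mdef by auto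
    qed
  next
    fix j assume "1 \<le> j" "j \<le> Suc m"
    then show "M (Suc m) j = k j" unfolding Mdef by auto
  next
    fix i j assume h: "in_tri (Suc m) i j" "2 \<le> j" "M i j = M (i-1) (j-1)"
    show "D i j = NE"
    proof (cases "i = Suc m")
      case True
      have j: "1 \<le> j - 1" "j - 1 \<le> m" "j \<le> Suc m" "1 \<le> j" using h True unfolding in_tri_def by auto
      have "k j = l (j - 1)" using h(3) True j T(6)[of "j - 1"] unfolding Mdef by auto
      moreover have "l (j - 1) \<le> k j - nw_ind (arr j)" using lb[of "j - 1"] j by (simp add: Suc_diff_1)
      ultimately have "nw_ind (arr j) = 0" using ne0(2)[of "arr j"] by auto
      then have "arr j = NE" unfolding nw_ind_def by (cases "arr j") auto
      then show ?thesis unfolding Ddef using True j by auto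
    next
      case False
      have it: "in_tri m i j" using intri2[OF h(1) False] .
      have "m1 i j = m1 (i-1) (j-1)" using h(3) False it unfolding Mdef in_tri_def by auto
      then show ?thesis using T(7)[OF it h(2)] False unfolding Ddef by auto
    qed
  next
    fix i j assume h: "in_tri (Suc m) i j" "j < i" "M i j = M (i-1) j"
    show "D i j = NW"
    proof (cases "i = Suc m")
      case True
      have j: "1 \<le> j" "j \<le> m" using h True unfolding in_tri_def by auto
      have "k j = l j" using h(3) True j T(6)[of j] unfolding Mdef by auto
      moreover have "k j + ne_ind (arr j) \<le> l j" using lb[of j] j by simp
      ultimately have "ne_ind (arr j) = 0" using ne0(1)[of "arr j"] by auto
      then have "arr j = NW" unfolding ne_ind_def by (cases "arr j") auto
      then show ?thesis unfolding Ddef using True j by auto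
    next
      case False
      have it: "in_tri m i j" using intri2[OF h(1) False] .
      have "m1 i j = m1 (i-1) j" using h(3) False h(2) it unfolding Mdef in_tri_def by auto
      then show ?thesis using T(8)[OF it h(2)] False unfolding Ddef by auto
    qed
  qed
  then show ?thesis unfolding M_def D_def by simp
qed

lemma detach_row_mem:
  assumes MD: "(M, D) \<in> arrowed_triangles (Suc m) k"
  shows "detach_row (Suc m) (M, D) \<in> row_decomposition (Suc m) k"
proof -
  note T = arrowed_trianglesD[OF MD]
  define l where "l = restrict (M m) {1..m}"
  define arr where "arr = restrict (D (Suc m)) {1..Suc m}"
  have arr: "arr \<in> arrow_rows (Suc m)" unfolding arrow_rows_def arr_def by auto
  have "l j \<in> entry_range k arr j" if j: "j \<in> {1..m}" for j
  proof -
    have "k j \<le> M m j" "M m j \<le> k (Suc j)" using T(3,4)[of j m] T(6)[of j] T(6)[of "Suc j"] j by auto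
    moreover have "D (Suc m) j = NW" if "M m j = k j"
      using T(8)[of "Suc m" j] T(6)[of j] that j unfolding in_tri_def by auto
    moreover have "D (Suc m) (Suc j) = NE" if "M m j = k (Suc j)"
      using T(7)[of "Suc m" "Suc j"] T(6)[of "Suc j"] that j unfolding in_tri_def by auto
    ultimately show ?thesis using j unfolding mem_entry_range_iff l_def arr_def by auto
  qed
  then have l: "l \<in> admissible_rows (Suc m) k arr"
    unfolding admissible_rows_def l_def by auto
  have t: "((\<lambda>i j. if i = Suc m then 0 else M i j), (\<lambda>i j. if i = Suc m then NW else D i j))
      \<in> arrowed_triangles m l"
  proof (rule arrowed_trianglesI)
    fix i j assume "\<not> in_tri m i j"
    then show "(if i = Suc m then 0 else M i j) = 0" "(if i = Suc m then NW else D i j) = NW"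
      using T(1,2)[of i j] unfolding in_tri_def by auto
  next
    fix i j assume "1 \<le> j" "j \<le> i" "i < m"
    then show "(if i + 1 = Suc m then 0 else M (i + 1) j) \<le> (if i = Suc m then 0 else M i j)"
      "(if i = Suc m then 0 else M i j) \<le> (if i + 1 = Suc m then 0 else M (i + 1) (j + 1))"
      using T(3,4)[of j i] by auto
  next
    fix i j assume "1 \<le> j" "j < i" "i \<le> m"
    then show "(if i = Suc m then 0 else M i j) < (if i = Suc m then 0 else M i (j + 1))"
      using T(5)[of j i] by auto
  next
    fix j assume "1 \<le> j" "j \<le> m"
    then show "(if m = Suc m then 0 else M m j) = l j" unfolding l_def by auto
  next
    fix i j assume "in_tri m i j" "2 \<le> j"
      "(if i = Suc m then 0 else M i j) = (if i - 1 = Suc m then 0 else M (i - 1) (j - 1))"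
    then show "(if i = Suc m then NW else D i j) = NE" using T(7)[of i j] unfolding in_tri_def by auto
  next
    fix i j assume "in_tri m i j" "j < i"
      "(if i = Suc m then 0 else M i j) = (if i - 1 = Suc m then 0 else M (i - 1) j)"
    then show "(if i = Suc m then NW else D i j) = NW" using T(8)[of i j] unfolding in_tri_def by auto
  qed
  have eq: "detach_row (Suc m) (M, D) = (arr, l, (\<lambda>i j. if i = Suc m then 0 else M i j),
      (\<lambda>i j. if i = Suc m then NW else D i j))"
    unfolding detach_row_def arr_def l_def fst_conv snd_conv diff_Suc_1 ..
  show ?thesis unfolding row_decomposition_def diff_Suc_1 eq mem_Sigma_iff by (rule conjI[OF arr conjI[OF l t]])
qed

lemma attach_detach_row:
  assumes "(M, D) \<in> arrowed_triangles (Suc m) k"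
  shows "(\<lambda>(arr, l, t). attach_row (Suc m) k arr t) (detach_row (Suc m) (M, D)) = (M, D)"
  using arrowed_trianglesD(1,2,6)[OF assms]
  by (auto simp: attach_row_def detach_row_def in_tri_def fun_eq_iff)

lemma detach_attach_row:
  assumes "(arr, l, m1, d1) \<in> row_decomposition (Suc m) k"
  shows "detach_row (Suc m) (attach_row (Suc m) k arr (m1, d1)) = (arr, l, m1, d1)"
proof -
  have arr: "arr \<in> arrow_rows (Suc m)" and l: "l \<in> admissible_rows (Suc m) k arr"
    and t: "(m1, d1) \<in> arrowed_triangles m l"
    using assms unfolding row_decomposition_def by auto
  have "restrict (snd (attach_row (Suc m) k arr (m1, d1)) (Suc m)) {1..Suc m} = arr"
    by (rule ext) (use arr in \<open>auto simp: attach_row_def arrow_rows_def PiE_def extensional_def\<close>)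
  moreover have "restrict (fst (attach_row (Suc m) k arr (m1, d1)) (Suc m - 1)) {1..Suc m - 1} = l"
    by (rule ext) (use l arrowed_trianglesD(6)[OF t] in
        \<open>auto simp: attach_row_def admissible_rows_def PiE_def extensional_def\<close>)
  moreover have "(\<lambda>i j. if i = Suc m then 0 else fst (attach_row (Suc m) k arr (m1, d1)) i j) = m1"
    "(\<lambda>i j. if i = Suc m then NW else snd (attach_row (Suc m) k arr (m1, d1)) i j) = d1"
    using arrowed_trianglesD(1,2)[OF t] by (auto simp: attach_row_def fun_eq_iff in_tri_def)
  ultimately show ?thesis unfolding detach_row_def by simp
qed

lemma bij_betw_attach_row:
  assumes k: "\<And>j. 1 \<le> j \<Longrightarrow> j < Suc m \<Longrightarrow> k j < k (Suc j)"
  shows "bij_betw (\<lambda>(arr, l, t). attach_row (Suc m) k arr t) (row_decomposition (Suc m) k)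
           (arrowed_triangles (Suc m) k)"
proof (rule bij_betw_byWitness[where f'="detach_row (Suc m)"])
  show "\<forall>x\<in>row_decomposition (Suc m) k. detach_row (Suc m) ((\<lambda>(arr, l, t). attach_row (Suc m) k arr t) x) = x"
    using detach_attach_row by auto
  show "\<forall>y\<in>arrowed_triangles (Suc m) k. (\<lambda>(arr, l, t). attach_row (Suc m) k arr t) (detach_row (Suc m) y) = y"
    using attach_detach_row by auto
  show "(\<lambda>(arr, l, t). attach_row (Suc m) k arr t) ` row_decomposition (Suc m) k \<subseteq> arrowed_triangles (Suc m) k"
    unfolding row_decomposition_def by (auto intro: attach_row_mem[where k=k and m=m, OF k])
  show "detach_row (Suc m) ` arrowed_triangles (Suc m) k \<subseteq> row_decomposition (Suc m) k"
    using detach_row_mem by auto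
qed

lemma admissible_rows_strict:
  assumes k: "\<And>j. 1 \<le> j \<Longrightarrow> j < Suc m \<Longrightarrow> k j < k (Suc j)" and l: "l \<in> admissible_rows (Suc m) k arr"
  shows "\<And>j. 1 \<le> j \<Longrightarrow> j < m \<Longrightarrow> l j < l (Suc j)"
proof -
  fix j assume j: "1 \<le> j" "j < m"
  have a: "l j \<le> k (Suc j) - nw_ind (arr (Suc j))" using l j unfolding admissible_rows_def entry_range_def by (auto simp: PiE_iff)
  have b: "k (Suc j) + ne_ind (arr (Suc j)) \<le> l (Suc j)" using l j unfolding admissible_rows_def entry_range_def by (auto simp: PiE_iff)
  have "ne_ind (arr (Suc j)) + nw_ind (arr (Suc j)) \<ge> 1" unfolding ne_ind_def nw_ind_def by (cases "arr (Suc j)") auto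
  then show "l j < l (Suc j)" using a b by simp
qed

lemma finite_arrowed_triangles: "finite (arrowed_triangles n k)"
proof (induction n arbitrary: k)
  case 0
  then show ?case by (simp add: arrowed_triangles_0)
next
  case (Suc m)
  show ?case
  proof (cases "\<forall>j. 1 \<le> j \<longrightarrow> j < Suc m \<longrightarrow> k j < k (Suc j)")
    case True
    have "finite (row_decomposition (Suc m) k)"
      unfolding row_decomposition_def using Suc finite_admissible_rows finite_arrow_rows
      by (auto intro!: finite_SigmaI)
    then show ?thesis using bij_betw_finite bij_betw_attach_row True by blast
  next
    case False
    have "arrowed_triangles (Suc m) k = {}"
    proof (rule ccontr)
      assume "arrowed_triangles (Suc m) k \<noteq> {}"
      then obtain m1 d1 where "(m1, d1) \<in> arrowed_triangles (Suc m) k" by auto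
      then show False using False arrowed_triangles_bottom_strict by blast
    qed
    then show ?thesis by simp
  qed
qed

lemma prod_remove_two:
  assumes "finite A" "a \<in> A" "b \<in> A" "a \<noteq> b"
  shows "prod f A = f a * f b * prod f (A - {a, b})"
proof -
  have "prod f A = f a * prod f (A - {a})" using prod.remove assms by metis
  also have "prod f (A - {a}) = f b * prod f (A - {a} - {b})"
    using prod.remove[of "A - {a}" b f] assms by auto
  also have "A - {a} - {b} = A - {a, b}" by auto
  finally show ?thesis by (simp add: mult.assoc)
qed

lemma prod_atLeastAtMost_split: "a \<le> b \<Longrightarrow> (\<Prod>j=1..b. f j) = (\<Prod>j=1..a. f j) * (\<Prod>j=Suc a..b. (f j :: 'a::comm_monoid_mult))"
proof (induction b)
  case 0 then show ?case by simp
next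
  case (Suc b)
  show ?case
  proof (cases "a = Suc b")
    case True then show ?thesis by simp
  next
    case False
    then have "a \<le> b" using Suc by simp
    then show ?thesis using Suc by (simp add: prod.nat_ivl_Suc' mult.assoc)
  qed
qed

lemma sum_atLeastAtMost_split: "a \<le> b \<Longrightarrow> (\<Sum>j=1..b. f j) = (\<Sum>j=1..a. f j) + (\<Sum>j=Suc a..b. (f j :: 'a::comm_monoid_add))"
proof (induction b)
  case 0 then show ?case by simp
next
  case (Suc b)
  show ?case
  proof (cases "a = Suc b")
    case True then show ?thesis by simp
  next
    case False
    then have "a \<le> b" using Suc by simp
    then show ?thesis using Suc by (simp add: sum.nat_ivl_Suc' add.assoc)
  qed
qed

lemma prod_atLeastAtMost_Suc_split: "a \<le> n \<Longrightarrow> (\<Prod>j=1..Suc n. f j) = (\<Prod>j=1..a. f j) * f (Suc a) * (\<Prod>j=Suc a..n. (f (Suc j) :: 'a::comm_monoid_mult))"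
proof -
  assume a: "a \<le> n"
  have "(\<Prod>j=Suc a..Suc n. f j) = f (Suc a) * (\<Prod>j=Suc a..n. f (Suc j))"
    using a by (subst prod.atLeast_Suc_atMost) (simp_all add: prod.shift_bounds_cl_Suc_ivl del: prod.cl_ivl_Suc)
  then show ?thesis using prod_atLeastAtMost_split[of a "Suc n" f] a by (simp add: mult.assoc)
qed

lemma sum_atLeastAtMost_Suc_split: "a \<le> n \<Longrightarrow> (\<Sum>j=1..Suc n. f j) = (\<Sum>j=1..a. f j) + f (Suc a) + (\<Sum>j=Suc a..n. (f (Suc j) :: 'a::comm_monoid_add))"
proof -
  assume a: "a \<le> n"
  have "(\<Sum>j=Suc a..Suc n. f j) = f (Suc a) + (\<Sum>j=Suc a..n. f (Suc j))"
    using a by (subst sum.atLeast_Suc_atMost) (simp_all add: sum.shift_bounds_cl_Suc_ivl del: sum.cl_ivl_Suc)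
  then show ?thesis using sum_atLeastAtMost_split[of a "Suc n" f] a by (simp add: add.assoc)
qed

lemma prod_power_int_same_base: "(x::'a::field) \<noteq> 0 \<Longrightarrow> (\<Prod>j\<in>A. x powi e j) = x powi (\<Sum>j\<in>A. e j)"
  by (induction A rule: infinite_finite_induct) (auto simp: power_int_add)

lemma power_int_divide_split: "((y::'a::field) / x) powi k = y powi k * x powi (- k)"
  by (subst power_int_divide_distrib) (simp add: power_int_minus divide_inverse)

lemma power_int_add_nonzero: "(y::'a::field) \<noteq> 0 \<Longrightarrow> y powi a * y powi b = y powi (a + b)"
  by (simp add: power_int_add)

lemma geometric_sum_power_int:
  fixes z :: "'a::field"
  assumes z: "z \<noteq> 0" and ab: "\<alpha> \<le> \<beta> + 1"
  shows "(1 - z) * (\<Sum>t\<in>{\<alpha>..\<beta>}. z powi t) = z powi \<alpha> - z powi (\<beta> + 1)"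
proof -
  have "\<alpha> - 1 \<le> \<beta>" using ab by simp
  then show ?thesis
  proof (induction \<beta> rule: int_ge_induct)
    case base
    then show ?case by simp
  next
    case (step i)
    have "{\<alpha>..i + 1} = insert (i + 1) {\<alpha>..i}" using step(1) by auto
    then have "(\<Sum>t\<in>{\<alpha>..i + 1}. z powi t) = z powi (i + 1) + (\<Sum>t\<in>{\<alpha>..i}. z powi t)"
      by simp
    define S where "S = (\<Sum>t\<in>{\<alpha>..i}. z powi t)"
    have e: "z powi (i + 1 + 1) = z powi (i + 1) * z" using z by (rule power_int_add_1[OF disjI1])
    have "(1 - z) * (\<Sum>t\<in>{\<alpha>..i + 1}. z powi t) = z powi (i + 1) - z powi (i + 1) * z + (1 - z) * S"
      unfolding S_def \<open>(\<Sum>t\<in>{\<alpha>..i + 1}. z powi t) = z powi (i + 1) + (\<Sum>t\<in>{\<alpha>..i}. z powi t)\<close>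
      by (simp add: algebra_simps)
    also have "\<dots> = z powi \<alpha> - z powi (i + 1 + 1)"
      using step.IH e unfolding S_def by simp
    finally show ?case .
  qed
qed

lemma prod_if_eq_power_card: "finite A \<Longrightarrow> (\<Prod>i\<in>A. if P i then c else 1) = c ^ card {i\<in>A. P i}"
proof -
  assume fin: "finite A"
  have "(\<Prod>i\<in>A. if P i then c else 1) = (\<Prod>i\<in>A \<inter> {i. P i}. c) * (\<Prod>i\<in>A \<inter> - {i. P i}. 1)"
    by (rule prod.If_cases[OF fin])
  also have "A \<inter> {i. P i} = {i\<in>A. P i}" by auto
  finally show ?thesis by simp
qed

lemma prod_power_int_ratios:
  fixes Y :: "nat \<Rightarrow> 'a::field"
  assumes Y: "\<And>i. Y i \<noteq> 0"
  shows "(\<Prod>j=1..n. Y j powi (int j + int j - 1)) * (\<Prod>q=1..n. \<Prod>p=1..<q. Y p / Y q) = (\<Prod>j=1..n. Y j ^ n)"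
proof (induction n)
  case 0 then show ?case by simp
next
  case (Suc n)
  have e1: "Y (Suc n) powi (int (Suc n) + int (Suc n) - 1) = Y (Suc n) ^ (2 * n + 1)"
  proof -
    have "int (Suc n) + int (Suc n) - 1 = int (2 * n + 1)" by simp
    then show ?thesis by (simp only: power_int_of_nat)
  qed
  have e2: "(\<Prod>p=1..<Suc n. Y p / Y (Suc n)) = (\<Prod>p=1..n. Y p) / Y (Suc n) ^ n"
    by (simp add: prod_dividef atLeastLessThanSuc_atLeastAtMost)
  have e3: "(\<Prod>j=1..n. Y j ^ Suc n) = (\<Prod>j=1..n. Y j ^ n) * (\<Prod>j=1..n. Y j)"
    by (simp add: prod.distrib[symmetric] mult.commute)
  have a: "(\<Prod>j=1..Suc n. Y j powi (int j + int j - 1)) = (\<Prod>j=1..n. Y j powi (int j + int j - 1)) * Y (Suc n) ^ (2 * n + 1)"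
    unfolding e1[symmetric] by simp
  have b: "(\<Prod>q=1..Suc n. \<Prod>p=1..<q. Y p / Y q) = (\<Prod>q=1..n. \<Prod>p=1..<q. Y p / Y q) * ((\<Prod>p=1..n. Y p) / Y (Suc n) ^ n)"
    unfolding e2[symmetric] by simp
  have "(\<Prod>j=1..Suc n. Y j powi (int j + int j - 1)) * (\<Prod>q=1..Suc n. \<Prod>p=1..<q. Y p / Y q)
      = ((\<Prod>j=1..n. Y j powi (int j + int j - 1)) * (\<Prod>q=1..n. \<Prod>p=1..<q. Y p / Y q))
        * (Y (Suc n) ^ (2 * n + 1) * ((\<Prod>p=1..n. Y p) / Y (Suc n) ^ n))"
    unfolding a b by (simp only: mult_ac)
  also have "\<dots> = (\<Prod>j=1..n. Y j ^ n) * (Y (Suc n) ^ (2 * n + 1) * ((\<Prod>p=1..n. Y p) / Y (Suc n) ^ n))"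
    unfolding Suc ..
  also have "\<dots> = (\<Prod>j=1..n. Y j ^ Suc n) * Y (Suc n) ^ Suc n"
  proof -
    have "Y (Suc n) ^ (2 * n + 1) = Y (Suc n) ^ Suc n * Y (Suc n) ^ n"
      by (simp add: power_add[symmetric] mult_2)
    then show ?thesis unfolding e3 using Y[of "Suc n"] by (simp add: field_simps)
  qed
  also have "\<dots> = (\<Prod>j=1..Suc n. Y j ^ Suc n)" by simp
  finally show ?case .
qed

lemma sum_arrow_UNIV: "(\<Sum>a\<in>UNIV. f a) = f NW + f NE + (f NWNE :: 'a::comm_monoid_add)"
  by (simp add: arrow_UNIV add.assoc)

lemma downward_closed_eq_interval:
  assumes S: "S \<subseteq> {1..m}" and dc: "\<And>j. 1 \<le> j \<Longrightarrow> Suc j \<le> m \<Longrightarrow> Suc j \<in> S \<Longrightarrow> j \<in> S"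
  shows "\<exists>a\<in>{0..m}. S = {1..a}"
proof (cases "S = {}")
  case True then show ?thesis by (intro bexI[of _ 0]) auto
next
  case False
  have fin: "finite S" using S finite_subset by blast
  define a where "a = Max S"
  have aS: "a \<in> S" unfolding a_def using fin False by simp
  have am: "a \<le> m" using aS S by auto
  have down: "\<forall>d. 1 \<le> a - d \<longrightarrow> a - d \<in> S"
  proof
    fix d show "1 \<le> a - d \<longrightarrow> a - d \<in> S"
    proof (induction d)
      case 0 then show ?case using aS by simp
    next
      case (Suc d)
      show ?case
      proof
        assume h: "1 \<le> a - Suc d"
        then have "Suc (a - Suc d) = a - d" by arith
        moreover have "a - d \<in> S" using Suc h by auto
        ultimately show "a - Suc d \<in> S" using dc[of "a - Suc d"] h am by auto
      qed
    qed
  qed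
  have "S = {1..a}"
  proof
    show "S \<subseteq> {1..a}" using S fin a_def by auto
    show "{1..a} \<subseteq> S"
    proof
      fix i assume "i \<in> {1..a}"
      then show "i \<in> S" using down[rule_format, of "a - i"] by auto
    qed
  qed
  then show ?thesis using am by auto
qed

lemma sum_Pow_eq_sum_initial_segments:
  fixes F :: "nat set \<Rightarrow> 'a::comm_monoid_add"
  assumes "\<And>S j. S \<subseteq> {1..m} \<Longrightarrow> 1 \<le> j \<Longrightarrow> Suc j \<le> m \<Longrightarrow> j \<notin> S \<Longrightarrow> Suc j \<in> S \<Longrightarrow> F S = 0"
  shows "(\<Sum>S\<in>Pow {1..m}. F S) = (\<Sum>a=0..m. F {1..a})"
proof -
  have "(\<Sum>S\<in>Pow {1..m}. F S) = (\<Sum>S\<in>(\<lambda>a. {1..a}) ` {0..m}. F S)"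
  proof (rule sum.mono_neutral_right)
    show "\<forall>S\<in>Pow {1..m} - (\<lambda>a. {1..a}) ` {0..m}. F S = 0"
      using downward_closed_eq_interval assms by (metis Diff_iff PowD image_iff)
  qed auto
  also have "\<dots> = (\<Sum>a=0..m. F {1..a})"
  proof -
    have "inj_on (\<lambda>a. {1..a::nat}) {0..m}"
      by (rule inj_onI) (metis card_atLeastAtMost diff_Suc_1)
    then show ?thesis by (simp add: sum.reindex)
  qed
  finally show ?thesis by simp
qed

section \<open>The weight of the bottom row\<close>

locale triangle_weights =
  fixes u v w :: "'a::field" and X :: "nat \<Rightarrow> 'a"
  assumes X_nonzero [simp]: "X i \<noteq> 0"
begin

definition arrow_weight :: "'a \<Rightarrow> arrow \<Rightarrow> 'a" where
  "arrow_weight x a = (case a of NE \<Rightarrow> u * x | NW \<Rightarrow> v / x | NWNE \<Rightarrow> w)"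

definition row_weight :: "nat \<Rightarrow> (nat \<Rightarrow> int) \<Rightarrow> (nat \<Rightarrow> arrow) \<Rightarrow> (nat \<Rightarrow> int) \<Rightarrow> 'a" where
  "row_weight n k arr l = (\<Prod>i=1..n. arrow_weight (X n) (arr i)) * X n powi ((\<Sum>j=1..n. k j) - (\<Sum>j=1..n-1. l j))"

lemma prod_arrow_weight:
  assumes x: "x \<noteq> 0" and fin: "finite A"
  shows "(\<Prod>i\<in>A. arrow_weight x (arr i)) = u ^ card {i\<in>A. arr i = NE} * v ^ card {i\<in>A. arr i = NW} * w ^ card {i\<in>A. arr i = NWNE}
          * x powi (int (card {i\<in>A. arr i = NE}) - int (card {i\<in>A. arr i = NW}))"
proof -
  have "arrow_weight x a = (if a = NE then u * x else 1) * (if a = NW then v / x else 1) * (if a = NWNE then w else 1)" for a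
    unfolding arrow_weight_def by (cases a) auto
  then have "(\<Prod>i\<in>A. arrow_weight x (arr i)) = (\<Prod>i\<in>A. if arr i = NE then u * x else 1) * (\<Prod>i\<in>A. if arr i = NW then v / x else 1)
      * (\<Prod>i\<in>A. if arr i = NWNE then w else 1)"
    by (simp add: prod.distrib)
  also have "\<dots> = (u * x) ^ card {i\<in>A. arr i = NE} * (v / x) ^ card {i\<in>A. arr i = NW} * w ^ card {i\<in>A. arr i = NWNE}"
    using fin by (simp add: prod_if_eq_power_card)
  finally show ?thesis using x by (simp add: power_mult_distrib power_divide power_int_diff)
qed

lemma amt_weight_attach_row:
  assumes xs: "(arr, l, t) \<in> row_decomposition (Suc m) k"
  shows "amt_weight (Suc m) u v w X (attach_row (Suc m) k arr t) = row_weight (Suc m) k arr l * amt_weight m u v w X t"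
proof -
  obtain m1 d1 where t': "t = (m1, d1)" by (cases t)
  have tm: "(m1, d1) \<in> arrowed_triangles m l" using xs unfolding row_decomposition_def t' by auto
  define M where "M = fst (attach_row (Suc m) k arr t)"
  define D where "D = snd (attach_row (Suc m) k arr t)"
  have c: "attach_row (Suc m) k arr t = (M, D)" unfolding M_def D_def by simp
  have Mi: "i \<noteq> Suc m \<Longrightarrow> M i j = m1 i j" for i j unfolding M_def attach_row_def t' by simp
  have Di: "i \<noteq> Suc m \<Longrightarrow> D i j = d1 i j" for i j unfolding D_def attach_row_def t' by simp
  have MN: "j \<in> {1..Suc m} \<Longrightarrow> M (Suc m) j = k j" for j unfolding M_def attach_row_def t' by simp
  have DN: "j \<in> {1..Suc m} \<Longrightarrow> D (Suc m) j = arr j" for j unfolding D_def attach_row_def t' by simp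
  have row_count_above: "i \<le> m \<Longrightarrow> row_count D i a = row_count d1 i a" for i a
    unfolding row_count_def using Di by (metis (no_types, lifting) Suc_n_not_le_n)
  have row_count_bottom: "row_count D (Suc m) a = card {j\<in>{1..Suc m}. arr j = a}" for a
    unfolding row_count_def using DN by (metis (no_types, lifting))
  have row_sum_above: "i \<le> m \<Longrightarrow> row_sum M i = row_sum m1 i" for i
    unfolding row_sum_def using Mi by (metis (no_types, lifting) Suc_n_not_le_n sum.cong)
  have row_sum_bottom: "row_sum M (Suc m) = (\<Sum>j=1..Suc m. k j)" unfolding row_sum_def using MN by simp
  have row_sum_top: "row_sum m1 m = (\<Sum>j=1..m. l j)" unfolding row_sum_def using arrowed_trianglesD(6)[OF tm] by simp
  have total_count_Suc: "total_count (Suc m) D a = total_count m d1 a + row_count D (Suc m) a" for a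
    unfolding total_count_def using row_count_above by simp
  define cNE where "cNE = card {j\<in>{1..Suc m}. arr j = NE}"
  define cNW where "cNW = card {j\<in>{1..Suc m}. arr j = NW}"
  define cB where "cB = card {j\<in>{1..Suc m}. arr j = NWNE}"
  define x where "x = X (Suc m)"
  have prod_rows: "(\<Prod>i=1..Suc m. X i powi (row_sum M i - row_sum M (i - 1) + int (row_count D i NE) - int (row_count D i NW)))
      = (\<Prod>i=1..m. X i powi (row_sum m1 i - row_sum m1 (i - 1) + int (row_count d1 i NE) - int (row_count d1 i NW)))
        * x powi ((\<Sum>j=1..Suc m. k j) - (\<Sum>j=1..m. l j) + int cNE - int cNW)"
  proof -
    have "(\<Prod>i=1..m. X i powi (row_sum M i - row_sum M (i - 1) + int (row_count D i NE) - int (row_count D i NW)))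
        = (\<Prod>i=1..m. X i powi (row_sum m1 i - row_sum m1 (i - 1) + int (row_count d1 i NE) - int (row_count d1 i NW)))"
    proof (rule prod.cong[OF refl])
      fix i assume "i \<in> {1..m}"
      then have "i \<le> m" "i - 1 \<le> m" by auto
      then show "X i powi (row_sum M i - row_sum M (i - 1) + int (row_count D i NE) - int (row_count D i NW))
        = X i powi (row_sum m1 i - row_sum m1 (i - 1) + int (row_count d1 i NE) - int (row_count d1 i NW))"
        by (simp add: row_sum_above row_count_above)
    qed
    then show ?thesis
      by (simp add: row_sum_above row_sum_bottom row_sum_top row_count_bottom cNE_def cNW_def x_def)
  qed
  have row_weight_eq: "row_weight (Suc m) k arr l = u ^ cNE * v ^ cNW * w ^ cB * x powi (int cNE - int cNW) * x powi ((\<Sum>j=1..Suc m. k j) - (\<Sum>j=1..m. l j))"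
    unfolding row_weight_def x_def[symmetric] prod_arrow_weight[of x "{1..Suc m}" arr, OF X_nonzero[of "Suc m", folded x_def] finite_atLeastAtMost]
    cNE_def cNW_def cB_def by simp
  have exponent_split: "x powi ((\<Sum>j=1..Suc m. k j) - (\<Sum>j=1..m. l j) + int cNE - int cNW) = x powi (int cNE - int cNW) * x powi ((\<Sum>j=1..Suc m. k j) - (\<Sum>j=1..m. l j))"
    unfolding x_def by (simp add: power_int_add[symmetric] algebra_simps)
  define PR1 where "PR1 = (\<Prod>i=1..m. X i powi (row_sum m1 i - row_sum m1 (i - 1) + int (row_count d1 i NE) - int (row_count d1 i NW)))"
  have weight_attached: "amt_weight (Suc m) u v w X (M, D) = u ^ (total_count m d1 NE + cNE) * v ^ (total_count m d1 NW + cNW)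
      * w ^ (total_count m d1 NWNE + cB) * (PR1 * x powi ((\<Sum>j=1..Suc m. k j) - (\<Sum>j=1..m. l j) + int cNE - int cNW))"
    unfolding amt_weight_def prod.case total_count_Suc row_count_bottom prod_rows cNE_def[symmetric] cNW_def[symmetric] cB_def[symmetric] PR1_def ..
  have weight_top: "amt_weight m u v w X (m1, d1) = u ^ total_count m d1 NE * v ^ total_count m d1 NW * w ^ total_count m d1 NWNE * PR1"
    unfolding amt_weight_def prod.case PR1_def ..
  show ?thesis
    unfolding c unfolding t' weight_attached weight_top row_weight_eq exponent_split by (simp only: power_add mult_ac)
qed

lemma gf_arrowed_triangles_Suc:
  assumes k: "\<And>j. 1 \<le> j \<Longrightarrow> j < Suc m \<Longrightarrow> k j < k (Suc j)"
  shows "(\<Sum>t\<in>arrowed_triangles (Suc m) k. amt_weight (Suc m) u v w X t)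
     = (\<Sum>arr\<in>arrow_rows (Suc m). \<Sum>l\<in>admissible_rows (Suc m) k arr. row_weight (Suc m) k arr l * (\<Sum>t\<in>arrowed_triangles m l. amt_weight m u v w X t))"
proof -
  have "(\<Sum>t\<in>arrowed_triangles (Suc m) k. amt_weight (Suc m) u v w X t)
      = (\<Sum>x\<in>row_decomposition (Suc m) k. amt_weight (Suc m) u v w X ((\<lambda>(arr, l, t). attach_row (Suc m) k arr t) x))"
    by (rule sum.reindex_bij_betw[OF bij_betw_attach_row[where k=k and m=m, OF k], symmetric])
  also have "\<dots> = (\<Sum>x\<in>row_decomposition (Suc m) k. (\<lambda>(arr, l, t). row_weight (Suc m) k arr l * amt_weight m u v w X t) x)"
    by (rule sum.cong[OF refl]) (auto simp: amt_weight_attach_row)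
  also have "\<dots> = (\<Sum>arr\<in>arrow_rows (Suc m). \<Sum>l\<in>admissible_rows (Suc m) k arr. \<Sum>t\<in>arrowed_triangles m l. row_weight (Suc m) k arr l * amt_weight m u v w X t)"
  proof -
    define F where "F arr l t = row_weight (Suc m) k arr l * amt_weight m u v w X t" for arr l t
    have "(\<Sum>x\<in>row_decomposition (Suc m) k. (\<lambda>(arr, l, t). F arr l t) x) = (\<Sum>arr\<in>arrow_rows (Suc m). \<Sum>p\<in>Sigma (admissible_rows (Suc m) k arr) (arrowed_triangles m). (\<lambda>(l, t). F arr l t) p)"
      unfolding row_decomposition_def diff_Suc_1
      by (rule sum.Sigma[symmetric]) (auto simp: finite_arrow_rows finite_admissible_rows finite_arrowed_triangles intro!: finite_SigmaI)
    also have "\<dots> = (\<Sum>arr\<in>arrow_rows (Suc m). \<Sum>l\<in>admissible_rows (Suc m) k arr. \<Sum>t\<in>arrowed_triangles m l. F arr l t)"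
      by (rule sum.cong[OF refl], rule sum.Sigma[symmetric]) (auto simp: finite_admissible_rows finite_arrowed_triangles)
    finally show ?thesis unfolding F_def .
  qed
  also have "\<dots> = (\<Sum>arr\<in>arrow_rows (Suc m). \<Sum>l\<in>admissible_rows (Suc m) k arr. row_weight (Suc m) k arr l * (\<Sum>t\<in>arrowed_triangles m l. amt_weight m u v w X t))"
    by (simp add: sum_distrib_left)
  finally show ?thesis .
qed

section \<open>Antisymmetrised sums\<close>

text \<open>\<open>pair_weight x y = (x / y) * (u * y + v / x + w)\<close>: the quotients are absorbed into
  the monomial \<open>\<Prod>i. X i ^ n\<close> in \<open>diag_prod_alt_sum\<close>, the remaining factors are those of the theorem.\<close>

definition pair_weight :: "'a \<Rightarrow> 'a \<Rightarrow> 'a" where "pair_weight x y = u*x + v/y + w*x/y"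

definition pair_prod :: "nat \<Rightarrow> (nat \<Rightarrow> nat) \<Rightarrow> 'a" where
  "pair_prod m \<pi> = (\<Prod>q=1..m. \<Prod>p=1..<q. pair_weight (X (\<pi> p)) (X (\<pi> q)))"

definition mono_prod :: "nat \<Rightarrow> (nat \<Rightarrow> int) \<Rightarrow> (nat \<Rightarrow> nat) \<Rightarrow> 'a" where
  "mono_prod n k \<pi> = (\<Prod>j=1..n. X (\<pi> j) powi (k j + int j - 1))"

definition alt_term :: "nat \<Rightarrow> (nat \<Rightarrow> int) \<Rightarrow> (nat \<Rightarrow> nat) \<Rightarrow> 'a" where
  "alt_term n k \<pi> = mono_prod n k \<pi> * pair_prod n \<pi>"

definition alt_sum :: "nat \<Rightarrow> (nat \<Rightarrow> int) \<Rightarrow> 'a" where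
  "alt_sum n k = (\<Sum>\<sigma> | \<sigma> permutes {1..n}. of_int (sign \<sigma>) * alt_term n k \<sigma>)"

lemma alt_sum_0: "alt_sum 0 k = 1"
  unfolding alt_sum_def alt_term_def mono_prod_def pair_prod_def by simp

lemma pair_prod_as_pairs: "pair_prod m \<sigma> = (\<Prod>(q,p)\<in>Sigma {1..m} (\<lambda>q. {1..<q}). pair_weight (X (\<sigma> p)) (X (\<sigma> q)))"
  unfolding pair_prod_def by (subst prod.Sigma) auto

lemma pair_prod_swap:
  assumes j: "1 \<le> j" "Suc j \<le> m"
  shows "\<exists>CR. pair_prod m (\<pi> \<circ> Transposition.transpose j (Suc j)) = pair_weight (X (\<pi> (Suc j))) (X (\<pi> j)) * CR
       \<and> pair_prod m \<pi> = pair_weight (X (\<pi> j)) (X (\<pi> (Suc j))) * CR"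
proof -
  define t where "t = Transposition.transpose j (Suc j)"
  define Pr where "Pr = Sigma {1..m} (\<lambda>q. {1..<q})"
  define R where "R = Pr - {(Suc j, j)}"
  define \<psi> where "\<psi> = (\<lambda>(q::nat, p::nat). (t q, t p))"
  have finPr: "finite Pr" unfolding Pr_def by auto
  have inPr: "(Suc j, j) \<in> Pr" unfolding Pr_def using j by auto
  have tt: "\<And>x. t (t x) = x" unfolding t_def by simp
  have tr: "\<And>x. x \<in> {1..m} \<Longrightarrow> t x \<in> {1..m}" unfolding t_def using j by (auto simp: Transposition.transpose_def)
  have psiR: "\<psi> x \<in> R" if xR: "x \<in> R" for x
  proof -
    obtain q p where x: "x = (q, p)" "q \<in> {1..m}" "1 \<le> p" "p < q" "(q,p) \<noteq> (Suc j, j)"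
      using xR unfolding R_def Pr_def by (cases x) auto
    have "t p < t q" using x unfolding t_def by (auto simp: Transposition.transpose_def)
    moreover have "t p \<ge> 1" using x j unfolding t_def by (auto simp: Transposition.transpose_def)
    moreover have "(t q, t p) \<noteq> (Suc j, j)" using x unfolding t_def by (auto simp: Transposition.transpose_def)
    ultimately show ?thesis using x tr unfolding R_def Pr_def \<psi>_def by auto
  qed
  have bij: "bij_betw \<psi> R R"
    by (rule bij_betw_byWitness[where f'=\<psi>]) (use psiR tt in \<open>auto simp: \<psi>_def\<close>)
  define F where "F \<sigma> = (\<lambda>(q::nat, p::nat). pair_weight (X (\<sigma> p)) (X (\<sigma> q)))" for \<sigma>
  have pair_prod_eq: "pair_prod m \<sigma> = prod (F \<sigma>) Pr" for \<sigma> unfolding pair_prod_as_pairs Pr_def F_def ..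
  have "prod (F (\<pi> \<circ> t)) R = prod (\<lambda>x. F \<pi> (\<psi> x)) R"
    by (rule prod.cong) (auto simp: F_def \<psi>_def)
  also have "\<dots> = prod (F \<pi>) R" by (rule prod.reindex_bij_betw[OF bij])
  finally have eR: "prod (F (\<pi> \<circ> t)) R = prod (F \<pi>) R" .
  have "pair_prod m (\<pi> \<circ> t) = F (\<pi> \<circ> t) (Suc j, j) * prod (F (\<pi> \<circ> t)) R"
    unfolding pair_prod_eq R_def using prod.remove[OF finPr inPr] by blast
  moreover have "pair_prod m \<pi> = F \<pi> (Suc j, j) * prod (F \<pi>) R"
    unfolding pair_prod_eq R_def using prod.remove[OF finPr inPr] by blast
  moreover have "F (\<pi> \<circ> t) (Suc j, j) = pair_weight (X (\<pi> (Suc j))) (X (\<pi> j))" "F \<pi> (Suc j, j) = pair_weight (X (\<pi> j)) (X (\<pi> (Suc j)))"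
    unfolding F_def t_def by auto
  ultimately show ?thesis unfolding t_def[symmetric] using eR by auto
qed

section \<open>The induction step\<close>

text \<open>Multiplied by \<open>X (Suc m) - X (\<pi> j)\<close>, the geometric sum over the \<open>j\<close>-th entry of the new row
  telescopes to \<open>lower_end - upper_end\<close>.  Expanding the product of these differences gives one
  \<open>subset_term\<close> for each set \<open>S\<close> of positions at which the lower end is chosen; the sum over the
  arrows then contributes \<open>boundary_weight\<close> at every position of the new row.\<close>

definition ratio :: "(nat \<Rightarrow> nat) \<Rightarrow> 'a \<Rightarrow> nat \<Rightarrow> 'a" where "ratio \<pi> x j = X (\<pi> j) / x"

definition lower_end :: "(nat \<Rightarrow> int) \<Rightarrow> (nat \<Rightarrow> nat) \<Rightarrow> 'a \<Rightarrow> (nat \<Rightarrow> arrow) \<Rightarrow> nat \<Rightarrow> 'a" where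
  "lower_end k \<pi> x arr j = ratio \<pi> x j powi k j * (if has_ne (arr j) then ratio \<pi> x j else 1)"

definition upper_end :: "(nat \<Rightarrow> int) \<Rightarrow> (nat \<Rightarrow> nat) \<Rightarrow> 'a \<Rightarrow> (nat \<Rightarrow> arrow) \<Rightarrow> nat \<Rightarrow> 'a" where
  "upper_end k \<pi> x arr j = ratio \<pi> x j powi (k (Suc j) + 1) * (if has_nw (arr (Suc j)) then x / X (\<pi> j) else 1)"

lemma sum_admissible_rows_alt_term:
  "(\<Sum>l\<in>admissible_rows (Suc m) k arr. row_weight (Suc m) k arr l * alt_term m l \<pi>)
   = (\<Prod>i=1..Suc m. arrow_weight (X (Suc m)) (arr i)) * X (Suc m) powi (\<Sum>j=1..Suc m. k j) * pair_prod m \<pi>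
     * (\<Prod>j=1..m. X (\<pi> j) powi (int j - 1) * (\<Sum>t\<in>entry_range k arr j. (X (\<pi> j) / X (Suc m)) powi t))"
proof -
  define x where "x = X (Suc m)"
  define W where "W = (\<Prod>i=1..Suc m. arrow_weight x (arr i))"
  define F where "F j t = X (\<pi> j) powi (int j - 1) * (X (\<pi> j) / x) powi t" for j t
  have x0: "x \<noteq> 0" unfolding x_def by simp
  have trm: "row_weight (Suc m) k arr l * alt_term m l \<pi> = (W * x powi (\<Sum>j=1..Suc m. k j) * pair_prod m \<pi>) * (\<Prod>j=1..m. F j (l j))" for l
  proof -
    have "x powi ((\<Sum>j=1..Suc m. k j) - (\<Sum>j=1..m. l j)) = x powi (\<Sum>j=1..Suc m. k j) * (\<Prod>j=1..m. x powi (- l j))"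
    proof -
      have "(\<Prod>j=1..m. x powi (- l j)) = x powi (- (\<Sum>j=1..m. l j))"
        using prod_power_int_same_base[OF x0, of "\<lambda>j. - l j"] by (simp add: sum_negf)
      moreover have "x powi ((\<Sum>j=1..Suc m. k j) - (\<Sum>j=1..m. l j)) = x powi (\<Sum>j=1..Suc m. k j) * x powi (- (\<Sum>j=1..m. l j))"
        using power_int_add[OF disjI1[OF x0], of "\<Sum>j=1..Suc m. k j" "- (\<Sum>j=1..m. l j)"] by simp
      ultimately show ?thesis by simp
    qed
    moreover have "mono_prod m l \<pi> * (\<Prod>j=1..m. x powi (- l j)) = (\<Prod>j=1..m. F j (l j))"
      unfolding mono_prod_def F_def prod.distrib[symmetric]
      by (rule prod.cong[OF refl]) (simp add: power_int_divide_split power_int_add_nonzero algebra_simps)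
    ultimately show ?thesis unfolding row_weight_def alt_term_def W_def x_def[symmetric] by (simp add: ac_simps)
  qed
  have "(\<Sum>l\<in>admissible_rows (Suc m) k arr. row_weight (Suc m) k arr l * alt_term m l \<pi>)
      = (W * x powi (\<Sum>j=1..Suc m. k j) * pair_prod m \<pi>) * (\<Sum>l\<in>PiE {1..m} (entry_range k arr). \<Prod>j=1..m. F j (l j))"
    unfolding trm admissible_rows_def by (simp add: sum_distrib_left)
  also have "(\<Sum>l\<in>PiE {1..m} (entry_range k arr). \<Prod>j=1..m. F j (l j)) = (\<Prod>j=1..m. \<Sum>t\<in>entry_range k arr j. F j t)"
    by (rule prod_sum_PiE[symmetric]) (auto simp: entry_range_def)
  also have "\<dots> = (\<Prod>j=1..m. X (\<pi> j) powi (int j - 1) * (\<Sum>t\<in>entry_range k arr j. (X (\<pi> j) / x) powi t))"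
    unfolding F_def by (simp add: sum_distrib_left)
  finally show ?thesis unfolding W_def x_def by simp
qed

lemma geometric_sum_entry_range:
  assumes x: "x \<noteq> 0" and kj: "k j < k (Suc j)"
  shows "(x - X (\<pi> j)) * (X (\<pi> j) powi (int j - 1) * (\<Sum>t\<in>entry_range k arr j. (X (\<pi> j) / x) powi t))
       = x * X (\<pi> j) powi (int j - 1) * (lower_end k \<pi> x arr j - upper_end k \<pi> x arr j)"
proof -
  define z where "z = X (\<pi> j) / x"
  have z0: "z \<noteq> 0" unfolding z_def using x by simp
  define \<alpha> where "\<alpha> = k j + ne_ind (arr j)"
  define \<beta> where "\<beta> = k (Suc j) - nw_ind (arr (Suc j))"
  have ab: "\<alpha> \<le> \<beta> + 1" unfolding \<alpha>_def \<beta>_def ne_ind_def nw_ind_def using kj by auto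
  have geometric_sum_power_int: "(1 - z) * (\<Sum>t\<in>{\<alpha>..\<beta>}. z powi t) = z powi \<alpha> - z powi (\<beta> + 1)" by (rule geometric_sum_power_int[OF z0 ab])
  have xz: "x - X (\<pi> j) = x * (1 - z)" unfolding z_def using x by (simp add: field_simps)
  have La: "z powi \<alpha> = lower_end k \<pi> x arr j"
    unfolding lower_end_def ratio_def z_def[symmetric] \<alpha>_def ne_ind_def using z0 by (simp add: power_int_add)
  have Ub: "z powi (\<beta> + 1) = upper_end k \<pi> x arr j"
  proof -
    have "z powi (k (Suc j) + 1 - 1) = z powi (k (Suc j) + 1) * inverse z"
      using z0 by (simp add: power_int_add_1)
    moreover have "inverse z = x / X (\<pi> j)" unfolding z_def by simp
    ultimately show ?thesis
      unfolding upper_end_def ratio_def z_def[symmetric] \<beta>_def nw_ind_def by (auto simp: algebra_simps)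
  qed
  have "(x - X (\<pi> j)) * (X (\<pi> j) powi (int j - 1) * (\<Sum>t\<in>entry_range k arr j. (X (\<pi> j) / x) powi t))
      = x * X (\<pi> j) powi (int j - 1) * ((1 - z) * (\<Sum>t\<in>{\<alpha>..\<beta>}. z powi t))"
    unfolding xz entry_range_def \<alpha>_def[symmetric] \<beta>_def[symmetric] z_def[symmetric] by (simp add: ac_simps)
  then show ?thesis unfolding geometric_sum_power_int La Ub .
qed

definition endpoint_prod :: "nat \<Rightarrow> (nat \<Rightarrow> int) \<Rightarrow> 'a \<Rightarrow> nat set \<Rightarrow> (nat \<Rightarrow> nat) \<Rightarrow> 'a" where
  "endpoint_prod m k x S \<pi> = (\<Prod>j=1..m. if j \<in> S then (X (\<pi> j) / x) powi k j
                                  else - ((X (\<pi> j) / x) powi (k (Suc j) + 1)))"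

definition boundary_weight :: "nat \<Rightarrow> 'a \<Rightarrow> nat set \<Rightarrow> (nat \<Rightarrow> nat) \<Rightarrow> nat \<Rightarrow> 'a" where
  "boundary_weight m x S \<pi> i = pair_weight (if i \<in> S then X (\<pi> i) else x) (if i - 1 \<in> {1..m} - S then X (\<pi> (i - 1)) else x)"

definition subset_term :: "nat \<Rightarrow> (nat \<Rightarrow> int) \<Rightarrow> nat set \<Rightarrow> (nat \<Rightarrow> nat) \<Rightarrow> 'a" where
  "subset_term m k S \<pi> = pair_prod m \<pi> * X (Suc m) powi (\<Sum>j=1..Suc m. k j) * X (Suc m) ^ m
      * (\<Prod>j=1..m. X (\<pi> j) powi (int j - 1)) * endpoint_prod m k (X (Suc m)) S \<pi>
      * (\<Prod>i=1..Suc m. boundary_weight m (X (Suc m)) S \<pi> i)"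

definition arrow_factor :: "nat \<Rightarrow> 'a \<Rightarrow> nat set \<Rightarrow> (nat \<Rightarrow> nat) \<Rightarrow> nat \<Rightarrow> arrow \<Rightarrow> 'a" where
  "arrow_factor m x S \<pi> i a = arrow_weight x a * (if has_ne a \<and> i \<in> S then ratio \<pi> x i else 1)
      * (if has_nw a \<and> i - 1 \<in> {1..m} - S then x / X (\<pi> (i - 1)) else 1)"

lemma sum_arrows_factor:
  assumes x: "x \<noteq> 0" and y: "y1 \<noteq> 0" "y2 \<noteq> 0"
  shows "(\<Sum>a\<in>UNIV. arrow_weight x a * (if has_ne a \<and> low then y1 / x else 1) * (if has_nw a \<and> up then x / y2 else 1))
     = pair_weight (if low then y1 else x) (if up then y2 else x)"
  using x y by (cases low; cases up) (simp_all add: pair_weight_def arrow_weight_def sum_arrow_UNIV field_simps)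

lemma sum_arrow_factor:
  assumes x: "x \<noteq> 0"
  shows "(\<Sum>a\<in>UNIV. arrow_factor m x S \<pi> i a) = boundary_weight m x S \<pi> i"
  unfolding arrow_factor_def boundary_weight_def ratio_def by (rule sum_arrows_factor[OF x X_nonzero X_nonzero])

lemma endpoint_prod_split:
  assumes S: "S \<subseteq> {1..m}"
  shows "endpoint_prod m k x S \<pi> = (\<Prod>j\<in>S. ratio \<pi> x j powi k j) * (\<Prod>j\<in>{1..m} - S. - (ratio \<pi> x j powi (k (Suc j) + 1)))"
proof -
  have "endpoint_prod m k x S \<pi> = (\<Prod>j\<in>{1..m} \<inter> {j. j \<in> S}. ratio \<pi> x j powi k j) * (\<Prod>j\<in>{1..m} \<inter> - {j. j \<in> S}. - (ratio \<pi> x j powi (k (Suc j) + 1)))"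
    unfolding endpoint_prod_def ratio_def by (rule prod.If_cases) simp
  also have "{1..m} \<inter> {j. j \<in> S} = S" using S by auto
  also have "{1..m} \<inter> - {j. j \<in> S} = {1..m} - S" by auto
  finally show ?thesis .
qed

lemma prod_has_ne_factor:
  assumes S: "S \<subseteq> {1..m}"
  shows "(\<Prod>j\<in>S. if has_ne (arr j) then ratio \<pi> x j else 1) = (\<Prod>i=1..Suc m. if has_ne (arr i) \<and> i \<in> S then ratio \<pi> x i else 1)"
proof -
  have "(\<Prod>i=1..Suc m. if has_ne (arr i) \<and> i \<in> S then ratio \<pi> x i else 1) = (\<Prod>i=1..Suc m. if i \<in> S then (if has_ne (arr i) then ratio \<pi> x i else 1) else 1)"
    by (rule prod.cong) auto
  also have "\<dots> = (\<Prod>i\<in>{1..Suc m} \<inter> {i. i \<in> S}. if has_ne (arr i) then ratio \<pi> x i else 1) * (\<Prod>i\<in>{1..Suc m} \<inter> - {i. i \<in> S}. 1)"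
    by (rule prod.If_cases) simp
  also have "{1..Suc m} \<inter> {i. i \<in> S} = S" using S by auto
  finally show ?thesis by simp
qed

lemma prod_has_nw_factor:
  assumes S: "S \<subseteq> {1..m}"
  shows "(\<Prod>j\<in>{1..m} - S. if has_nw (arr (Suc j)) then x / X (\<pi> j) else 1)
       = (\<Prod>i=1..Suc m. if has_nw (arr i) \<and> i - 1 \<in> {1..m} - S then x / X (\<pi> (i - 1)) else 1)"
proof -
  define h where "h i = (if has_nw (arr i) then x / X (\<pi> (i - 1)) else 1)" for i
  have "(\<Prod>i=1..Suc m. if has_nw (arr i) \<and> i - 1 \<in> {1..m} - S then x / X (\<pi> (i - 1)) else 1)
      = (\<Prod>i=1..Suc m. if i - 1 \<in> {1..m} - S then h i else 1)"
    unfolding h_def by (rule prod.cong) auto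
  also have "\<dots> = (\<Prod>i\<in>{1..Suc m} \<inter> {i. i - 1 \<in> {1..m} - S}. h i) * (\<Prod>i\<in>{1..Suc m} \<inter> - {i. i - 1 \<in> {1..m} - S}. 1)"
    by (rule prod.If_cases) simp
  also have "{1..Suc m} \<inter> {i. i - 1 \<in> {1..m} - S} = Suc ` ({1..m} - S)"
  proof
    show "{1..Suc m} \<inter> {i. i - 1 \<in> {1..m} - S} \<subseteq> Suc ` ({1..m} - S)"
    proof
      fix i assume i: "i \<in> {1..Suc m} \<inter> {i. i - 1 \<in> {1..m} - S}"
      then have "i = Suc (i - 1)" "i - 1 \<in> {1..m} - S" by auto
      then show "i \<in> Suc ` ({1..m} - S)" by (metis imageI)
    qed
    show "Suc ` ({1..m} - S) \<subseteq> {1..Suc m} \<inter> {i. i - 1 \<in> {1..m} - S}" by auto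
  qed
  also have "(\<Prod>i\<in>Suc ` ({1..m} - S). h i) = (\<Prod>j\<in>{1..m} - S. h (Suc j))"
    using prod.reindex[of Suc "{1..m} - S" h] by (simp add: comp_def)
  finally have "(\<Prod>i=1..Suc m. if has_nw (arr i) \<and> i - 1 \<in> {1..m} - S then x / X (\<pi> (i - 1)) else 1) = (\<Prod>j\<in>{1..m} - S. h (Suc j))" by simp
  then show ?thesis unfolding h_def diff_Suc_1 by (rule sym)
qed

lemma sum_arrow_rows_subset:
  assumes S: "S \<subseteq> {1..m}" and x: "x \<noteq> 0"
  shows "(\<Sum>arr\<in>arrow_rows (Suc m). (\<Prod>i=1..Suc m. arrow_weight x (arr i)) * ((\<Prod>j\<in>S. lower_end k \<pi> x arr j) * (\<Prod>j\<in>{1..m} - S. - upper_end k \<pi> x arr j)))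
       = endpoint_prod m k x S \<pi> * (\<Prod>i=1..Suc m. boundary_weight m x S \<pi> i)"
proof -
  have e: "(\<Prod>i=1..Suc m. arrow_weight x (arr i)) * ((\<Prod>j\<in>S. lower_end k \<pi> x arr j) * (\<Prod>j\<in>{1..m} - S. - upper_end k \<pi> x arr j))
        = endpoint_prod m k x S \<pi> * (\<Prod>i=1..Suc m. arrow_factor m x S \<pi> i (arr i))" for arr
  proof -
    have "(\<Prod>j\<in>S. lower_end k \<pi> x arr j) = (\<Prod>j\<in>S. ratio \<pi> x j powi k j) * (\<Prod>j\<in>S. if has_ne (arr j) then ratio \<pi> x j else 1)"
      unfolding lower_end_def by (simp add: prod.distrib)
    moreover have "(\<Prod>j\<in>{1..m} - S. - upper_end k \<pi> x arr j) = (\<Prod>j\<in>{1..m} - S. - (ratio \<pi> x j powi (k (Suc j) + 1))) * (\<Prod>j\<in>{1..m} - S. if has_nw (arr (Suc j)) then x / X (\<pi> j) else 1)"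
    proof -
      have "\<And>j. - upper_end k \<pi> x arr j = (- (ratio \<pi> x j powi (k (Suc j) + 1))) * (if has_nw (arr (Suc j)) then x / X (\<pi> j) else 1)"
        unfolding upper_end_def by simp
      then show ?thesis by (simp only: prod.distrib)
    qed
    moreover have "(\<Prod>i=1..Suc m. arrow_factor m x S \<pi> i (arr i)) = (\<Prod>i=1..Suc m. arrow_weight x (arr i)) * (\<Prod>i=1..Suc m. if has_ne (arr i) \<and> i \<in> S then ratio \<pi> x i else 1)
        * (\<Prod>i=1..Suc m. if has_nw (arr i) \<and> i - 1 \<in> {1..m} - S then x / X (\<pi> (i - 1)) else 1)"
      unfolding arrow_factor_def by (simp add: prod.distrib)
    ultimately show ?thesis unfolding endpoint_prod_split[OF S] prod_has_ne_factor[OF S] prod_has_nw_factor[OF S] by (simp add: ac_simps)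
  qed
  have "(\<Sum>arr\<in>arrow_rows (Suc m). \<Prod>i=1..Suc m. arrow_factor m x S \<pi> i (arr i)) = (\<Prod>i=1..Suc m. \<Sum>a\<in>UNIV. arrow_factor m x S \<pi> i a)"
    unfolding arrow_rows_def by (rule prod_sum_PiE[symmetric]) auto
  also have "\<dots> = (\<Prod>i=1..Suc m. boundary_weight m x S \<pi> i)" using sum_arrow_factor[OF x] by simp
  finally have s: "(\<Sum>arr\<in>arrow_rows (Suc m). \<Prod>i=1..Suc m. arrow_factor m x S \<pi> i (arr i)) = (\<Prod>i=1..Suc m. boundary_weight m x S \<pi> i)" .
  show ?thesis by (simp only: e sum_distrib_left[symmetric] s)
qed

lemma vandermonde_factor_expand:
  assumes k: "\<And>j. j \<in> {1..m} \<Longrightarrow> k j < k (Suc j)" and p: "\<pi> permutes {1..m}"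
  shows "(\<Prod>i=1..m. X (Suc m) - X i) * (\<Sum>arr\<in>arrow_rows (Suc m). \<Sum>l\<in>admissible_rows (Suc m) k arr. row_weight (Suc m) k arr l * alt_term m l \<pi>)
       = (\<Sum>S\<in>Pow {1..m}. subset_term m k S \<pi>)"
proof -
  define x where "x = X (Suc m)"
  have x0: "x \<noteq> 0" unfolding x_def by simp
  define C0 where "C0 = pair_prod m \<pi> * x powi (\<Sum>j=1..Suc m. k j) * x ^ m * (\<Prod>j=1..m. X (\<pi> j) powi (int j - 1))"
  define W where "W arr = (\<Prod>i=1..Suc m. arrow_weight x (arr i))" for arr
  have perm: "(\<Prod>i=1..m. x - X i) = (\<Prod>j=1..m. x - X (\<pi> j))"
    using prod.permute[OF p, of "\<lambda>i. x - X i"] by (simp add: comp_def)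
  have per_arr: "(\<Prod>i=1..m. x - X i) * (\<Sum>l\<in>admissible_rows (Suc m) k arr. row_weight (Suc m) k arr l * alt_term m l \<pi>)
      = W arr * C0 * (\<Prod>j=1..m. lower_end k \<pi> x arr j - upper_end k \<pi> x arr j)" for arr
  proof -
    have "(\<Prod>j=1..m. x - X (\<pi> j)) * (\<Prod>j=1..m. X (\<pi> j) powi (int j - 1) * (\<Sum>t\<in>entry_range k arr j. (X (\<pi> j) / x) powi t))
        = (\<Prod>j=1..m. (x - X (\<pi> j)) * (X (\<pi> j) powi (int j - 1) * (\<Sum>t\<in>entry_range k arr j. (X (\<pi> j) / x) powi t)))"
      by (simp only: prod.distrib)
    also have "\<dots> = (\<Prod>j=1..m. x * X (\<pi> j) powi (int j - 1) * (lower_end k \<pi> x arr j - upper_end k \<pi> x arr j))"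
      by (rule prod.cong[OF refl]) (rule geometric_sum_entry_range[OF x0], auto intro: k)
    also have "\<dots> = x ^ m * (\<Prod>j=1..m. X (\<pi> j) powi (int j - 1)) * (\<Prod>j=1..m. lower_end k \<pi> x arr j - upper_end k \<pi> x arr j)"
      by (simp add: prod.distrib)
    finally have e: "(\<Prod>j=1..m. x - X (\<pi> j)) * (\<Prod>j=1..m. X (\<pi> j) powi (int j - 1) * (\<Sum>t\<in>entry_range k arr j. (X (\<pi> j) / x) powi t))
        = x ^ m * (\<Prod>j=1..m. X (\<pi> j) powi (int j - 1)) * (\<Prod>j=1..m. lower_end k \<pi> x arr j - upper_end k \<pi> x arr j)" .
    show ?thesis unfolding sum_admissible_rows_alt_term perm x_def[symmetric] W_def[symmetric] C0_def
      using e by (simp add: ac_simps)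
  qed
  have expand: "(\<Prod>j=1..m. lower_end k \<pi> x arr j - upper_end k \<pi> x arr j)
      = (\<Sum>S\<in>Pow {1..m}. (\<Prod>j\<in>S. lower_end k \<pi> x arr j) * (\<Prod>j\<in>{1..m} - S. - upper_end k \<pi> x arr j))" for arr
    using prod_add[of "{1..m}" "lower_end k \<pi> x arr" "\<lambda>j. - upper_end k \<pi> x arr j"] by simp
  have "(\<Prod>i=1..m. x - X i) * (\<Sum>arr\<in>arrow_rows (Suc m). \<Sum>l\<in>admissible_rows (Suc m) k arr. row_weight (Suc m) k arr l * alt_term m l \<pi>)
      = (\<Sum>arr\<in>arrow_rows (Suc m). (\<Prod>i=1..m. x - X i) * (\<Sum>l\<in>admissible_rows (Suc m) k arr. row_weight (Suc m) k arr l * alt_term m l \<pi>))"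
    unfolding x_def by (rule sum_distrib_left)
  also have "\<dots> = (\<Sum>arr\<in>arrow_rows (Suc m). W arr * C0 * (\<Prod>j=1..m. lower_end k \<pi> x arr j - upper_end k \<pi> x arr j))"
    by (rule sum.cong[OF refl]) (rule per_arr)
  also have "\<dots> = (\<Sum>arr\<in>arrow_rows (Suc m). W arr * C0 * (\<Sum>S\<in>Pow {1..m}. (\<Prod>j\<in>S. lower_end k \<pi> x arr j) * (\<Prod>j\<in>{1..m} - S. - upper_end k \<pi> x arr j)))"
    unfolding expand ..
  also have "\<dots> = C0 * (\<Sum>S\<in>Pow {1..m}. \<Sum>arr\<in>arrow_rows (Suc m). W arr * ((\<Prod>j\<in>S. lower_end k \<pi> x arr j) * (\<Prod>j\<in>{1..m} - S. - upper_end k \<pi> x arr j)))"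
    by (subst sum.swap) (simp add: sum_distrib_left ac_simps)
  also have "\<dots> = C0 * (\<Sum>S\<in>Pow {1..m}. endpoint_prod m k x S \<pi> * (\<Prod>i=1..Suc m. boundary_weight m x S \<pi> i))"
  proof (intro arg_cong2[where f="(*)"] refl sum.cong)
    fix S assume "S \<in> Pow {1..m}"
    then have S: "S \<subseteq> {1..m}" by auto
    show "(\<Sum>arr\<in>arrow_rows (Suc m). W arr * ((\<Prod>j\<in>S. lower_end k \<pi> x arr j) * (\<Prod>j\<in>{1..m} - S. - upper_end k \<pi> x arr j)))
      = endpoint_prod m k x S \<pi> * (\<Prod>i=1..Suc m. boundary_weight m x S \<pi> i)"
      unfolding W_def by (rule sum_arrow_rows_subset[OF S x0])
  qed
  also have "\<dots> = (\<Sum>S\<in>Pow {1..m}. subset_term m k S \<pi>)"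
    unfolding sum_distrib_left subset_term_def C0_def x_def by (simp add: ac_simps)
  finally show ?thesis unfolding x_def .
qed

text \<open>If \<open>j \<notin> S\<close> and \<open>j+1 \<in> S\<close>, swapping \<open>\<pi> j\<close> and \<open>\<pi> (j+1)\<close> exchanges a factor
  \<open>pair_weight\<close> of \<open>pair_prod\<close> with one of the boundary product and leaves the rest unchanged.\<close>

lemma boundary_prod_swap:
  assumes j: "1 \<le> j" "Suc j \<le> m" "j \<notin> S" "Suc j \<in> S"
  shows "\<exists>R. (\<Prod>i=1..Suc m. boundary_weight m x S (\<pi> \<circ> Transposition.transpose j (Suc j)) i) = pair_weight (X (\<pi> j)) (X (\<pi> (Suc j))) * R
       \<and> (\<Prod>i=1..Suc m. boundary_weight m x S \<pi> i) = pair_weight (X (\<pi> (Suc j))) (X (\<pi> j)) * R"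
proof -
  define t where "t = Transposition.transpose j (Suc j)"
  have fin: "finite {1..Suc m}" and mem: "Suc j \<in> {1..Suc m}" using j by auto
  have e1: "boundary_weight m x S (\<pi> \<circ> t) i = boundary_weight m x S \<pi> i" if "i \<in> {1..Suc m} - {Suc j}" for i
  proof -
    have a: "i \<in> S \<Longrightarrow> t i = i" using that j unfolding t_def by (auto simp: Transposition.transpose_def)
    have b: "i - 1 \<in> {1..m} - S \<Longrightarrow> t (i - 1) = i - 1" using that j unfolding t_def by (auto simp: Transposition.transpose_def)
    show ?thesis unfolding boundary_weight_def using a b by auto
  qed
  have e2: "boundary_weight m x S (\<pi> \<circ> t) (Suc j) = pair_weight (X (\<pi> j)) (X (\<pi> (Suc j)))"
    "boundary_weight m x S \<pi> (Suc j) = pair_weight (X (\<pi> (Suc j))) (X (\<pi> j))"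
    unfolding boundary_weight_def t_def using j by auto
  show ?thesis unfolding t_def[symmetric]
    using prod.remove[OF fin mem, of "boundary_weight m x S (\<pi> \<circ> t)"] prod.remove[OF fin mem, of "boundary_weight m x S \<pi>"] e1 e2
    by (metis (no_types, lifting) prod.cong)
qed

definition endpoint_factor :: "(nat \<Rightarrow> int) \<Rightarrow> 'a \<Rightarrow> nat set \<Rightarrow> nat \<Rightarrow> 'a \<Rightarrow> 'a" where
  "endpoint_factor k x S j y = y powi (int j - 1) * (if j \<in> S then (y / x) powi k j else - ((y / x) powi (k (Suc j) + 1)))"

lemma endpoint_factor_prod: "(\<Prod>j=1..m. X (\<pi> j) powi (int j - 1)) * endpoint_prod m k x S \<pi> = (\<Prod>j=1..m. endpoint_factor k x S j (X (\<pi> j)))"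
  unfolding endpoint_prod_def endpoint_factor_def by (simp add: prod.distrib)

lemma endpoint_factor_swap:
  assumes "j \<notin> S" "Suc j \<in> S" "a \<noteq> 0" "b \<noteq> 0"
  shows "endpoint_factor k x S j a * endpoint_factor k x S (Suc j) b = endpoint_factor k x S j b * endpoint_factor k x S (Suc j) a"
proof -
  define K where "K = k (Suc j)"
  have h1: "y powi (int j - 1) * (y / x) powi (K + 1) = y powi (int j + K) / x powi (K + 1)" if "y \<noteq> 0" for y
    using that by (simp add: power_int_divide_distrib power_int_add[symmetric])
  have h2: "y powi int j * (y / x) powi K = y powi (int j + K) / x powi K" if "y \<noteq> 0" for y
  proof -
    have "y powi (int j + K) = y powi int j * y powi K" using power_int_add[of y "int j" K] that by simp
    then show ?thesis by (simp add: power_int_divide_distrib)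
  qed
  have "endpoint_factor k x S j a * endpoint_factor k x S (Suc j) b = - ((a powi (int j + K) / x powi (K + 1)) * (b powi (int j + K) / x powi K))"
    using assms h1[of a] h2[of b] unfolding endpoint_factor_def K_def[symmetric] by simp
  moreover have "endpoint_factor k x S j b * endpoint_factor k x S (Suc j) a = - ((b powi (int j + K) / x powi (K + 1)) * (a powi (int j + K) / x powi K))"
    using assms h1[of b] h2[of a] unfolding endpoint_factor_def K_def[symmetric] by simp
  ultimately show ?thesis by (simp add: ac_simps)
qed

lemma endpoint_factor_prod_swap:
  assumes j: "1 \<le> j" "Suc j \<le> m" "j \<notin> S" "Suc j \<in> S"
  shows "(\<Prod>i=1..m. endpoint_factor k x S i (X ((\<pi> \<circ> Transposition.transpose j (Suc j)) i))) = (\<Prod>i=1..m. endpoint_factor k x S i (X (\<pi> i)))"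
proof -
  define t where "t = Transposition.transpose j (Suc j)"
  have fin: "finite {1..m}" and m1: "j \<in> {1..m}" "Suc j \<in> {1..m}" "j \<noteq> Suc j" using j by auto
  have rest: "(\<Prod>i\<in>{1..m} - {j, Suc j}. endpoint_factor k x S i (X ((\<pi> \<circ> t) i))) = (\<Prod>i\<in>{1..m} - {j, Suc j}. endpoint_factor k x S i (X (\<pi> i)))"
    by (rule prod.cong) (auto simp: t_def)
  show ?thesis unfolding t_def[symmetric]
    using prod_remove_two[OF fin m1, of "\<lambda>i. endpoint_factor k x S i (X ((\<pi> \<circ> t) i))"]
          prod_remove_two[OF fin m1, of "\<lambda>i. endpoint_factor k x S i (X (\<pi> i))"] rest
          endpoint_factor_swap[OF j(3,4), of "X (\<pi> (Suc j))" "X (\<pi> j)" k x]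
    by (simp add: t_def)
qed

lemma subset_term_swap:
  assumes j: "1 \<le> j" "Suc j \<le> m" "j \<notin> S" "Suc j \<in> S"
  shows "subset_term m k S (\<pi> \<circ> Transposition.transpose j (Suc j)) = subset_term m k S \<pi>"
proof -
  define t where "t = Transposition.transpose j (Suc j)"
  define x where "x = X (Suc m)"
  obtain CR where C: "pair_prod m (\<pi> \<circ> t) = pair_weight (X (\<pi> (Suc j))) (X (\<pi> j)) * CR"
     "pair_prod m \<pi> = pair_weight (X (\<pi> j)) (X (\<pi> (Suc j))) * CR"
    using pair_prod_swap[OF j(1,2), of \<pi>] unfolding t_def by blast
  obtain R where R: "(\<Prod>i=1..Suc m. boundary_weight m x S (\<pi> \<circ> t) i) = pair_weight (X (\<pi> j)) (X (\<pi> (Suc j))) * R"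
     "(\<Prod>i=1..Suc m. boundary_weight m x S \<pi> i) = pair_weight (X (\<pi> (Suc j))) (X (\<pi> j)) * R"
    using boundary_prod_swap[OF j, of x \<pi>] unfolding t_def by blast
  have E: "(\<Prod>j=1..m. X ((\<pi> \<circ> t) j) powi (int j - 1)) * endpoint_prod m k x S (\<pi> \<circ> t)
         = (\<Prod>j=1..m. X (\<pi> j) powi (int j - 1)) * endpoint_prod m k x S \<pi>"
    unfolding endpoint_factor_prod using endpoint_factor_prod_swap[OF j] unfolding t_def by simp
  have "subset_term m k S (\<pi> \<circ> t) = (x powi (\<Sum>j=1..Suc m. k j) * x ^ m) * (pair_prod m (\<pi> \<circ> t) * (\<Prod>i=1..Suc m. boundary_weight m x S (\<pi> \<circ> t) i))
     * ((\<Prod>j=1..m. X ((\<pi> \<circ> t) j) powi (int j - 1)) * endpoint_prod m k x S (\<pi> \<circ> t))"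
    unfolding subset_term_def x_def by (simp add: ac_simps)
  also have "\<dots> = (x powi (\<Sum>j=1..Suc m. k j) * x ^ m) * (pair_prod m \<pi> * (\<Prod>i=1..Suc m. boundary_weight m x S \<pi> i))
     * ((\<Prod>j=1..m. X (\<pi> j) powi (int j - 1)) * endpoint_prod m k x S \<pi>)"
    using C R E by (simp add: ac_simps)
  also have "\<dots> = subset_term m k S \<pi>"
    unfolding subset_term_def x_def by (simp add: ac_simps)
  finally show ?thesis unfolding t_def .
qed

lemma signed_sum_subset_term_eq_0:
  assumes j: "1 \<le> j" "Suc j \<le> m" "j \<notin> S" "Suc j \<in> S"
  shows "(\<Sum>\<pi> | \<pi> permutes {1..m}. of_int (sign \<pi>) * subset_term m k S \<pi>) = 0"
  by (rule signed_sum_permutes_eq_0_if_swap_invariant[where a=j and b="Suc j"]) (use j subset_term_swap[OF j] in auto)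

text \<open>For \<open>S = {1..a}\<close> the subset term is, up to sign, the term of \<open>alt_sum (Suc m) k\<close> in which
  the new variable \<open>X (Suc m)\<close> sits at position \<open>a+1\<close>.\<close>

lemma pair_prod_insert_cycle:
  assumes a: "a \<le> m" and p: "\<pi> permutes {1..m}"
  shows "pair_prod (Suc m) (\<pi> \<circ> insert_cycle m a) = pair_prod m \<pi> * (\<Prod>j=1..a. pair_weight (X (\<pi> j)) (X (Suc m))) * (\<Prod>j=Suc a..m. pair_weight (X (Suc m)) (X (\<pi> j)))"
proof -
  define \<sigma> where "\<sigma> = \<pi> \<circ> insert_cycle m a"
  define x where "x = X (Suc m)"
  note sv = comp_insert_cycle_apply[OF p, where a=a, folded \<sigma>_def]
  define inC where "inC q = (\<Prod>p=1..<q. pair_weight (X (\<pi> p)) (X (\<pi> q)))" for q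
  have "pair_prod (Suc m) \<sigma> = (\<Prod>q=1..a. \<Prod>p=1..<q. pair_weight (X (\<sigma> p)) (X (\<sigma> q)))
       * (\<Prod>p=1..<Suc a. pair_weight (X (\<sigma> p)) (X (\<sigma> (Suc a))))
       * (\<Prod>q=Suc a..m. \<Prod>p=1..<Suc q. pair_weight (X (\<sigma> p)) (X (\<sigma> (Suc q))))"
    unfolding pair_prod_def using prod_atLeastAtMost_Suc_split[OF a] by blast
  also have "(\<Prod>q=1..a. \<Prod>p=1..<q. pair_weight (X (\<sigma> p)) (X (\<sigma> q))) = (\<Prod>q=1..a. inC q)"
    unfolding inC_def by (rule prod.cong[OF refl], rule prod.cong[OF refl]) (auto simp: sv)
  also have "(\<Prod>p=1..<Suc a. pair_weight (X (\<sigma> p)) (X (\<sigma> (Suc a)))) = (\<Prod>j=1..a. pair_weight (X (\<pi> j)) x)"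
    unfolding x_def using sv by (auto simp: atLeastLessThanSuc_atLeastAtMost intro!: prod.cong)
  also have "(\<Prod>q=Suc a..m. \<Prod>p=1..<Suc q. pair_weight (X (\<sigma> p)) (X (\<sigma> (Suc q)))) = (\<Prod>q=Suc a..m. inC q * pair_weight x (X (\<pi> q)))"
  proof (rule prod.cong[OF refl])
    fix q assume q: "q \<in> {Suc a..m}"
    then obtain q' where q': "q = Suc q'" "a \<le> q'" by (cases q) auto
    have "(\<Prod>p=1..<Suc q. pair_weight (X (\<sigma> p)) (X (\<sigma> (Suc q)))) = (\<Prod>p=1..Suc q'. pair_weight (X (\<sigma> p)) (X (\<pi> q)))"
      using q sv(3)[of q] by (simp add: atLeastLessThanSuc_atLeastAtMost q')
    also have "\<dots> = (\<Prod>p=1..a. pair_weight (X (\<sigma> p)) (X (\<pi> q))) * pair_weight (X (\<sigma> (Suc a))) (X (\<pi> q)) * (\<Prod>p=Suc a..q'. pair_weight (X (\<sigma> (Suc p))) (X (\<pi> q)))"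
      using prod_atLeastAtMost_Suc_split[OF q'(2)] by blast
    also have "\<dots> = (\<Prod>p=1..a. pair_weight (X (\<pi> p)) (X (\<pi> q))) * pair_weight x (X (\<pi> q)) * (\<Prod>p=Suc a..q'. pair_weight (X (\<pi> p)) (X (\<pi> q)))"
      using sv q q' unfolding x_def by (auto intro!: prod.cong)
    also have "\<dots> = inC q * pair_weight x (X (\<pi> q))"
      unfolding inC_def q'(1) atLeastLessThanSuc_atLeastAtMost using prod_atLeastAtMost_split[OF q'(2), of "\<lambda>p. pair_weight (X (\<pi> p)) (X (\<pi> (Suc q')))"]
      by (simp add: ac_simps)
    finally show "(\<Prod>p=1..<Suc q. pair_weight (X (\<sigma> p)) (X (\<sigma> (Suc q)))) = inC q * pair_weight x (X (\<pi> q))" .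
  qed
  also have "pair_prod m \<pi> = (\<Prod>q=1..a. inC q) * (\<Prod>q=Suc a..m. inC q)"
    unfolding pair_prod_def inC_def using prod_atLeastAtMost_split[OF a] by blast
  ultimately show ?thesis unfolding \<sigma>_def[symmetric] x_def[symmetric] by (simp add: prod.distrib ac_simps)
qed

lemma boundary_prod_interval:
  assumes a: "a \<le> m"
  shows "(\<Prod>i=1..Suc m. boundary_weight m x {1..a} \<pi> i) = (\<Prod>j=1..a. pair_weight (X (\<pi> j)) x) * pair_weight x x * (\<Prod>j=Suc a..m. pair_weight x (X (\<pi> j)))"
proof -
  have "(\<Prod>i=1..Suc m. boundary_weight m x {1..a} \<pi> i) = (\<Prod>i=1..a. boundary_weight m x {1..a} \<pi> i) * boundary_weight m x {1..a} \<pi> (Suc a) * (\<Prod>j=Suc a..m. boundary_weight m x {1..a} \<pi> (Suc j))"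
    using prod_atLeastAtMost_Suc_split[OF a] by blast
  also have "(\<Prod>i=1..a. boundary_weight m x {1..a} \<pi> i) = (\<Prod>j=1..a. pair_weight (X (\<pi> j)) x)"
    by (rule prod.cong) (auto simp: boundary_weight_def)
  also have "boundary_weight m x {1..a} \<pi> (Suc a) = pair_weight x x" by (auto simp: boundary_weight_def)
  also have "(\<Prod>j=Suc a..m. boundary_weight m x {1..a} \<pi> (Suc j)) = (\<Prod>j=Suc a..m. pair_weight x (X (\<pi> j)))"
    by (rule prod.cong) (auto simp: boundary_weight_def)
  finally show ?thesis .
qed

lemma mono_prod_insert_cycle:
  assumes a: "a \<le> m" and p: "\<pi> permutes {1..m}"
  shows "mono_prod (Suc m) k (\<pi> \<circ> insert_cycle m a) = (\<Prod>j=1..a. X (\<pi> j) powi (k j + int j - 1)) * X (Suc m) powi (k (Suc a) + int a)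
            * (\<Prod>j=Suc a..m. X (\<pi> j) powi (k (Suc j) + int j))"
proof -
  note sv = comp_insert_cycle_apply[OF p, where a=a]
  have "mono_prod (Suc m) k (\<pi> \<circ> insert_cycle m a) = (\<Prod>j=1..a. X ((\<pi> \<circ> insert_cycle m a) j) powi (k j + int j - 1))
        * X ((\<pi> \<circ> insert_cycle m a) (Suc a)) powi (k (Suc a) + int (Suc a) - 1)
        * (\<Prod>j=Suc a..m. X ((\<pi> \<circ> insert_cycle m a) (Suc j)) powi (k (Suc j) + int (Suc j) - 1))"
    unfolding mono_prod_def using prod_atLeastAtMost_Suc_split[OF a] by blast
  also have "\<dots> = (\<Prod>j=1..a. X (\<pi> j) powi (k j + int j - 1)) * X (Suc m) powi (k (Suc a) + int a)
            * (\<Prod>j=Suc a..m. X (\<pi> j) powi (k (Suc j) + int j))"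
    using sv by (auto intro!: prod.cong arg_cong2[where f="(*)"])
  finally show ?thesis .
qed

lemma endpoint_prod_interval:
  assumes a: "a \<le> m" and x: "x \<noteq> 0"
  shows "x powi (\<Sum>j=1..Suc m. k j) * x ^ m * (\<Prod>j=1..m. X (\<pi> j) powi (int j - 1)) * endpoint_prod m k x {1..a} \<pi>
       = (-1) ^ (m - a) * ((\<Prod>j=1..a. X (\<pi> j) powi (k j + int j - 1)) * x powi (k (Suc a) + int a)
            * (\<Prod>j=Suc a..m. X (\<pi> j) powi (k (Suc j) + int j)))"
proof -
  define A where "A = (\<Prod>j=1..a. X (\<pi> j) powi (k j + int j - 1))"
  define B where "B = (\<Prod>j=Suc a..m. X (\<pi> j) powi (k (Suc j) + int j))"
  have e1: "endpoint_factor k x {1..a} j (X (\<pi> j)) = X (\<pi> j) powi (k j + int j - 1) * x powi (- k j)" if "j \<in> {1..a}" for j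
  proof -
    have "X (\<pi> j) powi (k j + int j - 1) = X (\<pi> j) powi (int j - 1) * X (\<pi> j) powi (k j)"
      by (simp add: power_int_add_nonzero algebra_simps)
    then show ?thesis using that x by (simp add: endpoint_factor_def power_int_divide_split)
  qed
  have e2: "endpoint_factor k x {1..a} j (X (\<pi> j)) = (-1) * (X (\<pi> j) powi (k (Suc j) + int j) * x powi (- (k (Suc j) + 1)))"
    if "j \<in> {Suc a..m}" for j
  proof -
    have "X (\<pi> j) powi (k (Suc j) + int j) = X (\<pi> j) powi (int j - 1) * X (\<pi> j) powi (k (Suc j) + 1)"
      by (simp add: power_int_add_nonzero algebra_simps)
    then show ?thesis using that x by (simp add: endpoint_factor_def power_int_divide_split)
  qed
  have P1: "(\<Prod>j=1..a. endpoint_factor k x {1..a} j (X (\<pi> j))) = A * x powi (\<Sum>j=1..a. - k j)"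
    using prod.cong[OF refl e1, of "{1..a}"] unfolding A_def by (simp add: prod.distrib prod_power_int_same_base x)
  have P2: "(\<Prod>j=Suc a..m. endpoint_factor k x {1..a} j (X (\<pi> j))) = (-1) ^ (m - a) * (B * x powi (\<Sum>j=Suc a..m. - (k (Suc j) + 1)))"
  proof -
    have "(\<Prod>j=Suc a..m. endpoint_factor k x {1..a} j (X (\<pi> j))) = (\<Prod>j=Suc a..m. (-1) * (X (\<pi> j) powi (k (Suc j) + int j) * x powi (- (k (Suc j) + 1))))"
      by (rule prod.cong[OF refl]) (rule e2)
    also have "\<dots> = (\<Prod>j=Suc a..m. (-1::'a)) * ((\<Prod>j=Suc a..m. X (\<pi> j) powi (k (Suc j) + int j)) * (\<Prod>j=Suc a..m. x powi (- (k (Suc j) + 1))))"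
      by (simp only: prod.distrib)
    also have "(\<Prod>j=Suc a..m. (-1::'a)) = (-1) ^ (m - a)" by simp
    finally show ?thesis unfolding B_def prod_power_int_same_base[OF x] .
  qed
  have split: "(\<Prod>j=1..m. endpoint_factor k x {1..a} j (X (\<pi> j))) = (\<Prod>j=1..a. endpoint_factor k x {1..a} j (X (\<pi> j))) * (\<Prod>j=Suc a..m. endpoint_factor k x {1..a} j (X (\<pi> j)))"
    using prod_atLeastAtMost_split[OF a] by blast
  have ex: "(\<Sum>j=1..Suc m. k j) + int m + (\<Sum>j=1..a. - k j) + (\<Sum>j=Suc a..m. - (k (Suc j) + 1)) = k (Suc a) + int a"
  proof -
    have "(\<Sum>j=Suc a..m. - (k (Suc j) + 1)) = - (\<Sum>j=Suc a..m. k (Suc j)) - int (m - a)"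
      by (simp add: sum_subtractf sum_negf)
    moreover have "(\<Sum>j=1..Suc m. k j) = (\<Sum>j=1..a. k j) + k (Suc a) + (\<Sum>j=Suc a..m. k (Suc j))"
      using sum_atLeastAtMost_Suc_split[OF a] by blast
    ultimately show ?thesis using a by (simp add: sum_negf)
  qed
  have "x powi (\<Sum>j=1..Suc m. k j) * x ^ m * (\<Prod>j=1..m. X (\<pi> j) powi (int j - 1)) * endpoint_prod m k x {1..a} \<pi>
      = x powi (\<Sum>j=1..Suc m. k j) * x powi int m * ((\<Prod>j=1..m. X (\<pi> j) powi (int j - 1)) * endpoint_prod m k x {1..a} \<pi>)"
    by (simp add: mult.assoc)
  also have "\<dots> = (-1) ^ (m - a) * (A * B) * (x powi (\<Sum>j=1..Suc m. k j) * x powi int m * x powi (\<Sum>j=1..a. - k j) * x powi (\<Sum>j=Suc a..m. - (k (Suc j) + 1)))"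
    unfolding endpoint_factor_prod split P1 P2 by (simp add: ac_simps)
  also have "x powi (\<Sum>j=1..Suc m. k j) * x powi int m * x powi (\<Sum>j=1..a. - k j) * x powi (\<Sum>j=Suc a..m. - (k (Suc j) + 1))
      = x powi (k (Suc a) + int a)"
    by (subst ex[symmetric]) (simp only: power_int_add[OF disjI1[OF x]])
  finally show ?thesis unfolding A_def B_def by (simp add: ac_simps)
qed

lemma subset_term_interval:
  assumes a: "a \<le> m" and p: "\<pi> permutes {1..m}"
  shows "subset_term m k {1..a} \<pi> = (-1) ^ (m - a) * (pair_weight (X (Suc m)) (X (Suc m)) * alt_term (Suc m) k (\<pi> \<circ> insert_cycle m a))"
proof -
  define x where "x = X (Suc m)"
  have "subset_term m k {1..a} \<pi> = (x powi (\<Sum>j=1..Suc m. k j) * x ^ m * (\<Prod>j=1..m. X (\<pi> j) powi (int j - 1)) * endpoint_prod m k x {1..a} \<pi>)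
       * (pair_prod m \<pi> * (\<Prod>i=1..Suc m. boundary_weight m x {1..a} \<pi> i))"
    unfolding subset_term_def x_def by (simp add: ac_simps)
  also have "\<dots> = (-1) ^ (m - a) * (pair_weight x x * alt_term (Suc m) k (\<pi> \<circ> insert_cycle m a))"
    unfolding endpoint_prod_interval[OF a X_nonzero[of "Suc m"], folded x_def] boundary_prod_interval[OF a] alt_term_def mono_prod_insert_cycle[OF a p] pair_prod_insert_cycle[OF a p] x_def[symmetric]
    by (simp add: ac_simps)
  finally show ?thesis unfolding x_def .
qed

lemma signed_sum_subset_terms:
  "(\<Sum>S\<in>Pow {1..m}. \<Sum>\<pi> | \<pi> permutes {1..m}. of_int (sign \<pi>) * subset_term m k S \<pi>)
     = pair_weight (X (Suc m)) (X (Suc m)) * alt_sum (Suc m) k"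
proof -
  have "(\<Sum>S\<in>Pow {1..m}. \<Sum>\<pi> | \<pi> permutes {1..m}. of_int (sign \<pi>) * subset_term m k S \<pi>)
      = (\<Sum>a=0..m. \<Sum>\<pi> | \<pi> permutes {1..m}. of_int (sign \<pi>) * subset_term m k {1..a} \<pi>)"
    by (rule sum_Pow_eq_sum_initial_segments) (use signed_sum_subset_term_eq_0 in blast)
  also have "\<dots> = (\<Sum>a=0..m. \<Sum>\<pi> | \<pi> permutes {1..m}. (-1) ^ (m - a) * (of_int (sign \<pi>)
      * (pair_weight (X (Suc m)) (X (Suc m)) * alt_term (Suc m) k (\<pi> \<circ> insert_cycle m a))))"
  proof (intro sum.cong refl)
    fix a \<pi> assume "a \<in> {0..m}" "\<pi> \<in> {\<pi>. \<pi> permutes {1..m}}"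
    then show "of_int (sign \<pi>) * subset_term m k {1..a} \<pi> = (-1) ^ (m - a) * (of_int (sign \<pi>)
        * (pair_weight (X (Suc m)) (X (Suc m)) * alt_term (Suc m) k (\<pi> \<circ> insert_cycle m a)))"
      using subset_term_interval[of a m \<pi> k] by simp
  qed
  also have "\<dots> = pair_weight (X (Suc m)) (X (Suc m)) * alt_sum (Suc m) k"
    unfolding alt_sum_def signed_sum_permutes_Suc by (simp add: sum_distrib_left ac_simps)
  finally show ?thesis .
qed

lemma alt_sum_recursion:
  assumes k: "\<And>j. j \<in> {1..m} \<Longrightarrow> k j < k (Suc j)"
  shows "(\<Prod>i=1..m. X (Suc m) - X i)
       * (\<Sum>arr\<in>arrow_rows (Suc m). \<Sum>l\<in>admissible_rows (Suc m) k arr. row_weight (Suc m) k arr l * alt_sum m l)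
       = pair_weight (X (Suc m)) (X (Suc m)) * alt_sum (Suc m) k"
proof -
  define P where "P = {\<pi>. \<pi> permutes {1..m}}"
  have "(\<Prod>i=1..m. X (Suc m) - X i)
      * (\<Sum>arr\<in>arrow_rows (Suc m). \<Sum>l\<in>admissible_rows (Suc m) k arr. row_weight (Suc m) k arr l * alt_sum m l)
      = (\<Sum>\<pi>\<in>P. of_int (sign \<pi>) * ((\<Prod>i=1..m. X (Suc m) - X i)
         * (\<Sum>arr\<in>arrow_rows (Suc m). \<Sum>l\<in>admissible_rows (Suc m) k arr. row_weight (Suc m) k arr l * alt_term m l \<pi>)))"
  proof -
    define F where "F \<pi> arr l = of_int (sign \<pi>) * ((\<Prod>i=1..m. X (Suc m) - X i)
      * (row_weight (Suc m) k arr l * alt_term m l \<pi>))" for \<pi> arr l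
    have "(\<Prod>i=1..m. X (Suc m) - X i)
        * (\<Sum>arr\<in>arrow_rows (Suc m). \<Sum>l\<in>admissible_rows (Suc m) k arr. row_weight (Suc m) k arr l * alt_sum m l)
        = (\<Sum>arr\<in>arrow_rows (Suc m). \<Sum>l\<in>admissible_rows (Suc m) k arr. \<Sum>\<pi>\<in>P. F \<pi> arr l)"
      unfolding alt_sum_def P_def F_def by (simp add: sum_distrib_left ac_simps)
    also have "\<dots> = (\<Sum>\<pi>\<in>P. \<Sum>arr\<in>arrow_rows (Suc m). \<Sum>l\<in>admissible_rows (Suc m) k arr. F \<pi> arr l)"
      by (subst sum.swap) (simp add: sum.swap[of _ P])
    finally show ?thesis unfolding F_def by (simp add: sum_distrib_left)
  qed
  also have "\<dots> = (\<Sum>\<pi>\<in>P. of_int (sign \<pi>) * (\<Sum>S\<in>Pow {1..m}. subset_term m k S \<pi>))"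
  proof (rule sum.cong[OF refl])
    fix \<pi> assume "\<pi> \<in> P"
    then have "\<pi> permutes {1..m}" by (simp add: P_def)
    then show "of_int (sign \<pi>) * ((\<Prod>i=1..m. X (Suc m) - X i)
         * (\<Sum>arr\<in>arrow_rows (Suc m). \<Sum>l\<in>admissible_rows (Suc m) k arr. row_weight (Suc m) k arr l * alt_term m l \<pi>))
      = of_int (sign \<pi>) * (\<Sum>S\<in>Pow {1..m}. subset_term m k S \<pi>)"
      by (simp only: vandermonde_factor_expand[where k=k and m=m, OF k])
  qed
  also have "\<dots> = (\<Sum>S\<in>Pow {1..m}. \<Sum>\<pi>\<in>P. of_int (sign \<pi>) * subset_term m k S \<pi>)"
    by (simp add: sum_distrib_left sum.swap[of _ P])
  finally show ?thesis unfolding P_def signed_sum_subset_terms .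
qed

section \<open>The generating function\<close>

definition vandermonde :: "nat \<Rightarrow> 'a" where "vandermonde n = (\<Prod>j=1..n. \<Prod>i=1..<j. (X j - X i))"

definition diag_prod :: "nat \<Rightarrow> 'a" where "diag_prod n = (\<Prod>i=1..n. pair_weight (X i) (X i))"

lemma gf_times_vandermonde:
  assumes "\<And>j. 1 \<le> j \<Longrightarrow> j < n \<Longrightarrow> k j < k (Suc j)"
  shows "(\<Sum>t\<in>arrowed_triangles n k. amt_weight n u v w X t) * vandermonde n = diag_prod n * alt_sum n k"
  using assms
proof (induction n arbitrary: k)
  case 0
  show ?case by (simp add: arrowed_triangles_0 alt_sum_0 vandermonde_def diag_prod_def amt_weight_def total_count_def)
next
  case (Suc m)
  define new_factors where "new_factors = (\<Prod>i=1..m. X (Suc m) - X i)"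
  have vandermonde_Suc: "vandermonde (Suc m) = vandermonde m * new_factors"
    unfolding vandermonde_def new_factors_def by (simp add: atLeastLessThanSuc_atLeastAtMost)
  have IH: "(\<Sum>t\<in>arrowed_triangles m l. amt_weight m u v w X t) * vandermonde m = diag_prod m * alt_sum m l"
    if "l \<in> admissible_rows (Suc m) k arr" for l arr
    using Suc.IH admissible_rows_strict[where k=k and m=m, OF Suc.prems that] by blast
  have "(\<Sum>t\<in>arrowed_triangles (Suc m) k. amt_weight (Suc m) u v w X t) * vandermonde (Suc m)
      = new_factors * (\<Sum>arr\<in>arrow_rows (Suc m). \<Sum>l\<in>admissible_rows (Suc m) k arr.
          row_weight (Suc m) k arr l * ((\<Sum>t\<in>arrowed_triangles m l. amt_weight m u v w X t) * vandermonde m))"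
    using gf_arrowed_triangles_Suc[where k=k and m=m, OF Suc.prems] unfolding vandermonde_Suc
    by (simp add: sum_distrib_left sum_distrib_right ac_simps)
  also have "\<dots> = new_factors * (\<Sum>arr\<in>arrow_rows (Suc m). \<Sum>l\<in>admissible_rows (Suc m) k arr.
          row_weight (Suc m) k arr l * (diag_prod m * alt_sum m l))"
    by (intro arg_cong[where f="\<lambda>z. new_factors * z"] sum.cong refl) (simp add: IH)
  also have "\<dots> = diag_prod m * (new_factors * (\<Sum>arr\<in>arrow_rows (Suc m). \<Sum>l\<in>admissible_rows (Suc m) k arr.
          row_weight (Suc m) k arr l * alt_sum m l))"
    by (simp add: sum_distrib_left ac_simps)
  also have "\<dots> = diag_prod (Suc m) * alt_sum (Suc m) k"
  proof -
    have "new_factors * (\<Sum>arr\<in>arrow_rows (Suc m). \<Sum>l\<in>admissible_rows (Suc m) k arr.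
        row_weight (Suc m) k arr l * alt_sum m l) = pair_weight (X (Suc m)) (X (Suc m)) * alt_sum (Suc m) k"
      unfolding new_factors_def by (rule alt_sum_recursion) (use Suc.prems in auto)
    then show ?thesis by (simp add: diag_prod_def ac_simps)
  qed
  finally show ?case .
qed

lemma diag_prod_alt_sum:
  "diag_prod n * alt_sum n (\<lambda>j. int j) = (\<Prod>i=1..n. X i ^ n) *
     (\<Sum>\<sigma> | \<sigma> permutes {1..n}. of_int (sign \<sigma>) * (\<Prod>q=1..n. \<Prod>p=1..q. (u * X (\<sigma> q) + v / X (\<sigma> p) + w)))"
proof -
  have per: "diag_prod n * alt_term n (\<lambda>j. int j) \<sigma> = (\<Prod>i=1..n. X i ^ n) * (\<Prod>q=1..n. \<Prod>p=1..q. (u * X (\<sigma> q) + v / X (\<sigma> p) + w))"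
    if p: "\<sigma> permutes {1..n}" for \<sigma>
  proof -
    define Y where "Y j = X (\<sigma> j)" for j
    define R where "R p q = u * Y q + v / Y p + w" for p q
    have Y0: "\<And>i. Y i \<noteq> 0" unfolding Y_def by simp
    have pair_weight_split: "pair_weight (Y p) (Y q) = (Y p / Y q) * R p q" for p q
      unfolding pair_weight_def R_def using Y0[of p] Y0[of q] by (simp add: field_simps)
    have diag_prod_perm: "diag_prod n = (\<Prod>q=1..n. R q q)"
    proof -
      have "diag_prod n = (\<Prod>q=1..n. pair_weight (Y q) (Y q))"
        unfolding diag_prod_def Y_def using prod.permute[OF p, of "\<lambda>i. pair_weight (X i) (X i)"] by (simp add: comp_def)
      also have "\<dots> = (\<Prod>q=1..n. R q q)" using pair_weight_split Y0 by (intro prod.cong) auto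
      finally show ?thesis .
    qed
    have monomial_perm: "(\<Prod>i=1..n. X i ^ n) = (\<Prod>j=1..n. Y j ^ n)"
      unfolding Y_def using prod.permute[OF p, of "\<lambda>i. X i ^ n"] by (simp add: comp_def)
    have pair_prod_split: "pair_prod n \<sigma> = (\<Prod>q=1..n. \<Prod>p=1..<q. Y p / Y q) * (\<Prod>q=1..n. \<Prod>p=1..<q. R p q)"
      unfolding pair_prod_def Y_def[symmetric] pair_weight_split by (simp only: prod.distrib)
    have mono_prod_id: "mono_prod n (\<lambda>j. int j) \<sigma> = (\<Prod>j=1..n. Y j powi (int j + int j - 1))"
      unfolding mono_prod_def Y_def ..
    have diag_split: "(\<Prod>q=1..n. \<Prod>p=1..q. R p q) = (\<Prod>q=1..n. R q q) * (\<Prod>q=1..n. \<Prod>p=1..<q. R p q)"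
    proof -
      have "(\<Prod>p=1..q. R p q) = R q q * (\<Prod>p=1..<q. R p q)" if "q \<in> {1..n}" for q
        using that by (simp add: atLeastLessThanSuc_atLeastAtMost[symmetric] prod.atLeastLessThan_Suc)
      then show ?thesis by (simp add: prod.distrib)
    qed
    have "diag_prod n * alt_term n (\<lambda>j. int j) \<sigma> = ((\<Prod>j=1..n. Y j powi (int j + int j - 1)) * (\<Prod>q=1..n. \<Prod>p=1..<q. Y p / Y q))
         * ((\<Prod>q=1..n. R q q) * (\<Prod>q=1..n. \<Prod>p=1..<q. R p q))"
      unfolding alt_term_def diag_prod_perm pair_prod_split mono_prod_id by (simp add: ac_simps)
    also have "\<dots> = (\<Prod>i=1..n. X i ^ n) * (\<Prod>q=1..n. \<Prod>p=1..q. R p q)"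
      unfolding prod_power_int_ratios[OF Y0] diag_split monomial_perm ..
    finally show ?thesis unfolding R_def Y_def .
  qed
  show ?thesis unfolding alt_sum_def by (simp add: sum_distrib_left per ac_simps)
qed

lemma vandermonde_nonzero:
  assumes inj: "inj_on X {1..n}"
  shows "vandermonde n \<noteq> 0"
proof -
  have "X j - X i \<noteq> 0" if "j \<in> {1..n}" "i \<in> {1..<j}" for i j
    using inj_onD[OF inj, of j i] that by auto
  then show ?thesis unfolding vandermonde_def by (simp add: prod_zero_iff)
qed

lemma amt_gf_eq_signed_sum:
  assumes inj: "inj_on X {1..n}"
  shows "amt_gf n u v w X = (\<Prod>i=1..n. X i ^ n) *
     (\<Sum>\<sigma> | \<sigma> permutes {1..n}. of_int (sign \<sigma>) * (\<Prod>q=1..n. \<Prod>p=1..q. (u * X (\<sigma> q) + v / X (\<sigma> p) + w)))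
     / (\<Prod>j=1..n. \<Prod>i=1..<j. (X j - X i))"
proof -
  have "(\<Sum>t\<in>arrowed_triangles n (\<lambda>j. int j). amt_weight n u v w X t) * vandermonde n
      = diag_prod n * alt_sum n (\<lambda>j. int j)"
    by (rule gf_times_vandermonde) simp
  then have "amt_gf n u v w X * vandermonde n = diag_prod n * alt_sum n (\<lambda>j. int j)"
    unfolding amt_gf_def arrowed_MT_eq_arrowed_triangles .
  then have "amt_gf n u v w X = diag_prod n * alt_sum n (\<lambda>j. int j) / vandermonde n" using vandermonde_nonzero[OF inj] by (simp add: field_simps)
  then show ?thesis unfolding diag_prod_alt_sum vandermonde_def .
qed

end

lemma amt_gf_cong:
  assumes "\<And>i. i \<in> {1..n} \<Longrightarrow> Y i = X i"
  shows "amt_gf n u v w Y = amt_gf n u v w X"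
  unfolding amt_gf_def
proof (rule sum.cong[OF refl])
  fix t :: triangle
  have "(\<Prod>i=1..n. Y i powi e i) = (\<Prod>i=1..n. X i powi e i)" for e :: "nat \<Rightarrow> int"
    by (rule prod.cong[OF refl]) (simp add: assms)
  then show "amt_weight n u v w Y t = amt_weight n u v w X t"
    unfolding amt_weight_def by (simp split: prod.split)
qed

text \<open>Outside \<open>{1..n}\<close> the variables may vanish; replacing them there by \<open>1\<close> changes neither side.\<close>

theorem amt_gf_eq_signed_sum_prod:
  fixes X :: "nat \<Rightarrow> 'a::field"
  assumes nonzero: "\<And>i. i \<in> {1..n} \<Longrightarrow> X i \<noteq> 0" and inj: "inj_on X {1..n}"
  shows "amt_gf n u v w X = (\<Prod>i=1..n. X i ^ n) *
     (\<Sum>\<sigma> | \<sigma> permutes {1..n}. of_int (sign \<sigma>) * (\<Prod>q=1..n. \<Prod>p=1..q. (u * X (\<sigma> q) + v / X (\<sigma> p) + w)))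
     / (\<Prod>j=1..n. \<Prod>i=1..<j. (X j - X i))"
proof -
  define Y where "Y i = (if i \<in> {1..n} then X i else 1)" for i
  have Y: "Y i = X i" if "i \<in> {1..n}" for i using that by (simp add: Y_def)
  have "Y i \<noteq> 0" for i using nonzero by (simp add: Y_def)
  then interpret triangle_weights u v w Y by unfold_locales
  have "inj_on Y {1..n}" using inj by (rule inj_on_cong[THEN iffD2, rotated]) (simp add: Y)
  then have "amt_gf n u v w Y = (\<Prod>i=1..n. Y i ^ n) *
     (\<Sum>\<sigma> | \<sigma> permutes {1..n}. of_int (sign \<sigma>) * (\<Prod>q=1..n. \<Prod>p=1..q. (u * Y (\<sigma> q) + v / Y (\<sigma> p) + w)))
     / (\<Prod>j=1..n. \<Prod>i=1..<j. (Y j - Y i))"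
    by (rule amt_gf_eq_signed_sum)
  moreover have "(\<Prod>i=1..n. Y i ^ n) = (\<Prod>i=1..n. X i ^ n)"
    "(\<Prod>j=1..n. \<Prod>i=1..<j. (Y j - Y i)) = (\<Prod>j=1..n. \<Prod>i=1..<j. (X j - X i))"
    by (auto simp: Y intro!: prod.cong)
  moreover have "(\<Prod>q=1..n. \<Prod>p=1..q. (u * Y (\<sigma> q) + v / Y (\<sigma> p) + w))
      = (\<Prod>q=1..n. \<Prod>p=1..q. (u * X (\<sigma> q) + v / X (\<sigma> p) + w))" if "\<sigma> permutes {1..n}" for \<sigma>
    using permutes_in_image[OF that] by (auto simp: Y intro!: prod.cong)
  then have "(\<Sum>\<sigma> | \<sigma> permutes {1..n}. of_int (sign \<sigma>) * (\<Prod>q=1..n. \<Prod>p=1..q. (u * Y (\<sigma> q) + v / Y (\<sigma> p) + w)))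
      = (\<Sum>\<sigma> | \<sigma> permutes {1..n}. of_int (sign \<sigma>) * (\<Prod>q=1..n. \<Prod>p=1..q. (u * X (\<sigma> q) + v / X (\<sigma> p) + w)))"
    by (intro sum.cong refl) simp
  ultimately show ?thesis using amt_gf_cong[of n Y X, OF Y] by simp
qed

theorem mainTheorem15:
  fixes n :: nat and u v w :: "'a::field" and X :: "nat \<Rightarrow> 'a"
  assumes "n \<ge> 1"
    and "\<And>i. i \<in> {1..n} \<Longrightarrow> X i \<noteq> 0"
    and "inj_on X {1..n}"
  shows "amt_gf n u v w X =
           (\<Prod>i=1..n. X i ^ n) *
           det (mat n n (\<lambda>(i, j). (u * X (i+1) + w) ^ (j+1) - (- v / X (i+1)) ^ (j+1)))
           / (\<Prod>j=1..n. \<Prod>i=1..<j. (X j - X i))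
       \<and> (\<Prod>i=1..n. X i ^ n) *
           det (mat n n (\<lambda>(i, j). (u * X (i+1) + w) ^ (j+1) - (- v / X (i+1)) ^ (j+1)))
           / (\<Prod>j=1..n. \<Prod>i=1..<j. (X j - X i))
         = (\<Prod>i=1..n. X i ^ n) *
           (\<Sum>\<sigma> | \<sigma> permutes {1..n}. of_int (sign \<sigma>) *
              (\<Prod>q=1..n. \<Prod>p=1..q. (u * X (\<sigma> q) + v / X (\<sigma> p) + w)))
           / (\<Prod>j=1..n. \<Prod>i=1..<j. (X j - X i))"
proof -
  have "(\<Sum>\<sigma> | \<sigma> permutes {1..n}. of_int (sign \<sigma>) *
          (\<Prod>q=1..n. \<Prod>p=1..q. (u * X (\<sigma> q) + v / X (\<sigma> p) + w)))
      = det (mat n n (\<lambda>(i, j). alt_entry (\<lambda>i. u * X i + w) (\<lambda>i. v / X i) (j+1) (i+1)))"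
    using signed_sum_upper_prod_eq_det[of "\<lambda>i. u * X i + w" "\<lambda>i. v / X i" n] by (simp add: ac_simps)
  also have "\<dots> = det (mat n n (\<lambda>(i, j). (u * X (i+1) + w) ^ (j+1) - (- v / X (i+1)) ^ (j+1)))"
    by (simp add: alt_entry_def)
  finally show ?thesis using amt_gf_eq_signed_sum_prod[OF assms(2,3)] by simp
qed

end
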